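(* Fix $\beta_0\in\mathbb{R}^p$, $\sigma^2>0$, and a prior density $\pi$ on $\mathbb{R}^p$ that is continuous, bounded and satisfies $\pi(\beta_0)>0$. Let $r_n\to\infty$ and $\epsilon_n\to0$ be deterministic sequences. For each $n$, let $\mathcal{P}_n$ be a set of distributions $P$ of length-$n$ trajectories $H_n$ generated by the adaptive linear Gaussian sampling procedure (with true parameter $\beta_0$ and variance $\sigma^2$) under some sampling rule $\Lambda$, such that for every $P\in\mathcal{P}_n$: (i) each $x_j\in\{e_1,\dots,e_p\}$ almost surely; and (ii) $P\big(\lambda_{\min}(\mathbf{X}_n^\top\mathbf{X}_n)>r_n\big)>1-\epsilon_n$. Then for every $c>0$, $$\limsup_{n\to\infty}\ \sup_{P\in\mathcal{P}_n} P\Big(\big\|\pi(\cdot\mid H_n)-\mathcal{N}\big(\hat\beta_n,\sigma^2(\mathbf{X}_n^\top\mathbf{X}_n)^{-1}\big)\big\|_{\mathrm{TV}}>c\Big)=0.$$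
   Context: Adaptive linear Gaussian sampling procedure: given a covariate sampling rule $\Lambda$ mapping any finite history $H_{j-1}=((x_1,y_1),\dots,(x_{j-1},y_{j-1}))$ to a distribution $\Lambda(\cdot\mid H_{j-1})$ on $\mathbb{R}^p$, set $H_0=\emptyset$ and for $j=1,\dots,n$: draw $x_j\sim\Lambda(\cdot\mid H_{j-1})$, then $y_j\sim\mathcal{N}(x_j^\top\beta_0,\sigma^2)$ conditionally on the past and $x_j$, and set $H_j=((x_1,y_1),\dots,(x_j,y_j))$. $\mathbf{X}_n$ is the $n\times p$ matrix with rows $x_j^\top$, $\mathbf{y}_n$ the vector of $y_j$, $\hat\beta_n=(\mathbf{X}_n^\top\mathbf{X}_n)^{-1}\mathbf{X}_n^\top\mathbf{y}_n$, and $\pi(\beta\mid H_n)\propto\pi(\beta)\prod_{j=1}^n\exp(-(y_j-x_j^\top\beta)^2/(2\sigma^2))$ is the posterior. $\|\cdot\|_{\mathrm{TV}}$ is total variation distance. *)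

theory Defs
  imports "HOL-Analysis.Analysis" "HOL-Probability.Probability"
begin

text \<open>A history of length j: a function on indices 0..j-1 (extensional elsewhere),
  entry j = (x_j, y_j) with x_j in R^p and y_j real.\<close>
type_synonym 'p hist = "nat \<Rightarrow> (real^'p) \<times> real"

definition hist_space :: "nat \<Rightarrow> 'p::finite hist measure" where
  "hist_space j = PiM {..<j} (\<lambda>_. borel)"

definition valid_rule :: "(nat \<Rightarrow> 'p::finite hist \<Rightarrow> (real^'p) measure) \<Rightarrow> bool" where
  "valid_rule \<Lambda> \<longleftrightarrow> (\<forall>j. \<Lambda> j \<in> hist_space j \<rightarrow>\<^sub>M prob_algebra borel)"

fun traj :: "(nat \<Rightarrow> 'p::finite hist \<Rightarrow> (real^'p) measure) \<Rightarrow> real^'p \<Rightarrow> real \<Rightarrow> nat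
              \<Rightarrow> 'p hist measure" where
  "traj \<Lambda> \<beta>0 \<sigma>2 0 = return (hist_space 0) (\<lambda>_. undefined)"
| "traj \<Lambda> \<beta>0 \<sigma>2 (Suc j) =
     bind (traj \<Lambda> \<beta>0 \<sigma>2 j) (\<lambda>h. bind (\<Lambda> j h) (\<lambda>x.
       distr (density lborel (normal_density (x \<bullet> \<beta>0) (sqrt \<sigma>2))) (hist_space (Suc j))
             (\<lambda>y. h(j := (x, y)))))"

definition XtX :: "nat \<Rightarrow> 'p::finite hist \<Rightarrow> real^'p^'p" where
  "XtX n h = (\<chi> a b. \<Sum>j<n. fst (h j) $ a * fst (h j) $ b)"

definition Xty :: "nat \<Rightarrow> 'p::finite hist \<Rightarrow> real^'p" where
  "Xty n h = (\<chi> a. \<Sum>j<n. fst (h j) $ a * snd (h j))"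

definition beta_hat :: "nat \<Rightarrow> 'p::finite hist \<Rightarrow> real^'p" where
  "beta_hat n h = matrix_inv (XtX n h) *v Xty n h"

definition lambda_min :: "real^'p^'p \<Rightarrow> real" where
  "lambda_min A = Min {l. \<exists>v. v \<noteq> 0 \<and> A *v v = l *\<^sub>R v}"

definition likelihood :: "real \<Rightarrow> nat \<Rightarrow> 'p::finite hist \<Rightarrow> real^'p \<Rightarrow> real" where
  "likelihood \<sigma>2 n h \<beta> = (\<Prod>j<n. exp (- (snd (h j) - fst (h j) \<bullet> \<beta>)\<^sup>2 / (2 * \<sigma>2)))"

definition posterior :: "(real^'p \<Rightarrow> real) \<Rightarrow> real \<Rightarrow> nat \<Rightarrow> 'p::finite hist \<Rightarrow> (real^'p) measure" where
  "posterior \<pi> \<sigma>2 n h =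
     density lborel (\<lambda>\<beta>. ennreal (\<pi> \<beta> * likelihood \<sigma>2 n h \<beta> /
        (\<integral>b. \<pi> b * likelihood \<sigma>2 n h b \<partial>lborel)))"

definition mvn_density :: "real^'p \<Rightarrow> real^'p^'p \<Rightarrow> real^'p \<Rightarrow> real" where
  "mvn_density \<mu> \<Sigma> x =
     (2 * pi) powr (- real CARD('p) / 2) * det \<Sigma> powr (-1/2) *
     exp (- ((x - \<mu>) \<bullet> (matrix_inv \<Sigma> *v (x - \<mu>))) / 2)"

definition mvn :: "real^'p \<Rightarrow> real^'p^'p \<Rightarrow> (real^'p) measure" where
  "mvn \<mu> \<Sigma> = density lborel (\<lambda>x. ennreal (mvn_density \<mu> \<Sigma> x))"

definition tv_dist :: "'a measure \<Rightarrow> 'a measure \<Rightarrow> real" where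
  "tv_dist M N = (SUP A \<in> sets M. \<bar>measure M A - measure N A\<bar>)"

end

theory Submission
  imports Defs
begin

text \<open>With unit-vector covariates \<open>X\<^sup>T X\<close> is diagonal, its entries \<open>N\<^sub>k\<close> counting how often
  coordinate \<open>k\<close> was sampled, and the likelihood is, up to a factor free of \<open>\<beta>\<close>, the product
  \<open>g\<close> of the normal densities with means \<open>\<beta>_hat\<^sub>k\<close> and variances \<open>\<sigma>2 / N\<^sub>k\<close>, which is exactly
  the density of the normal approximation. The posterior density is therefore \<open>\<pi> g / \<integral> \<pi> g\<close>,
  whose \<open>L\<^sup>1\<close> distance to \<open>g\<close> is at most \<open>4 / \<pi>(\<beta>0)\<close> times \<open>\<integral> g |\<pi> - \<pi>(\<beta>0)|\<close>; by continuity
  and boundedness of \<open>\<pi>\<close> this is small as soon as all \<open>N\<^sub>k\<close> are large and \<open>\<beta>_hat\<close> is close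
  to \<open>\<beta>0\<close>.

  Closeness holds uniformly over adaptive sampling rules: for the noise score
  \<open>S\<^sub>k = \<Sum>\<^sub>j x\<^sub>j\<^sub>k (y\<^sub>j - x\<^sub>j \<bullet> \<beta>0)\<close>, the process \<open>exp (l S\<^sub>k - l\<^sup>2 \<sigma>2 N\<^sub>k / 2)\<close> has mean one whatever
  the rule, since each new noise is a centred normal independent of the past and of the new
  covariate. A Chernoff bound gives \<open>P(N\<^sub>k > r, |S\<^sub>k| \<ge> t N\<^sub>k) \<le> 2 exp (- r t\<^sup>2 / (2 \<sigma>2))\<close>, and
  \<open>\<beta>_hat\<^sub>k - \<beta>0\<^sub>k = S\<^sub>k / N\<^sub>k\<close>. On the event \<open>\<lambda>\<^sub>m\<^sub>i\<^sub>n (X\<^sup>T X) > r\<^sub>n\<close> every \<open>N\<^sub>k\<close> exceeds \<open>r\<^sub>n\<close>.\<close>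

section \<open>The trajectory measure\<close>

lemma space_hist_space: "space (hist_space j) = PiE {..<j} (\<lambda>_. UNIV)"
  by (simp add: hist_space_def space_PiM)

lemma space_hist_space_nonempty: "space (hist_space j) \<noteq> {}"
  by (simp add: space_hist_space PiE_eq_empty_iff)

lemma density_normal_eq_distr_shift:
  assumes "s > 0"
  shows "density lborel (normal_density \<mu> s) = distr (density lborel (normal_density 0 s)) lborel (\<lambda>t. \<mu> + t)"
proof -
  interpret prob_space "density lborel (normal_density 0 s)"
    using prob_space_normal_density[OF assms] .
  have "distributed (density lborel (normal_density 0 s)) lborel (\<lambda>x. x) (normal_density 0 s)"
    by (simp add: distributed_def distr_id2 sets_eq_imp_space_eq[of "density lborel _" lborel] assms)
  from normal_density_affine[OF this assms, of 1 \<mu>] show ?thesis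
    by (simp add: distributed_def)
qed

definition traj_step :: "(nat \<Rightarrow> 'p::finite hist \<Rightarrow> (real^'p) measure) \<Rightarrow> real^'p \<Rightarrow> real \<Rightarrow> nat
    \<Rightarrow> 'p hist \<Rightarrow> 'p hist measure" where
  "traj_step \<Lambda> \<beta>0 \<sigma>2 j h = bind (\<Lambda> j h) (\<lambda>x.
     distr (density lborel (normal_density (x \<bullet> \<beta>0) (sqrt \<sigma>2))) (hist_space (Suc j)) (\<lambda>y. h(j := (x, y))))"

lemma traj_Suc_bind: "traj \<Lambda> \<beta>0 \<sigma>2 (Suc j) = bind (traj \<Lambda> \<beta>0 \<sigma>2 j) (traj_step \<Lambda> \<beta>0 \<sigma>2 j)"
  by (simp add: traj_step_def[abs_def])

lemma measurable_hist_update: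
  "(\<lambda>((h::'p::finite hist, x::real^'p), t::real). h(j := (x, x \<bullet> \<beta>0 + t)))
     \<in> (hist_space j \<Otimes>\<^sub>M borel) \<Otimes>\<^sub>M lborel \<rightarrow>\<^sub>M hist_space (Suc j)"
  unfolding hist_space_def lessThan_Suc split_beta'
proof (rule measurable_fun_upd[where J="{..<j}"])
  show "(\<lambda>w::('p hist \<times> (real^'p)) \<times> real. fst (fst w))
      \<in> (Pi\<^sub>M {..<j} (\<lambda>_. borel) \<Otimes>\<^sub>M borel) \<Otimes>\<^sub>M lborel \<rightarrow>\<^sub>M Pi\<^sub>M {..<j} (\<lambda>_. borel)"
    by measurable
  show "(\<lambda>w::('p hist \<times> (real^'p)) \<times> real. (snd (fst w), snd (fst w) \<bullet> \<beta>0 + snd w))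
      \<in> (Pi\<^sub>M {..<j} (\<lambda>_. borel) \<Otimes>\<^sub>M borel) \<Otimes>\<^sub>M lborel \<rightarrow>\<^sub>M borel"
    unfolding borel_prod[symmetric] by measurable
qed auto

lemma measurable_hist_update_at:
  assumes "h \<in> space (hist_space j)"
  shows "(\<lambda>y. h(j := (x, y))) \<in> borel \<rightarrow>\<^sub>M hist_space (Suc j)"
  using measurable_Pair2[OF measurable_hist_update[of j 0], of "(h, x)"] assms
  by (simp add: space_pair_measure)

text \<open>Writing the response as \<open>x \<bullet> \<beta>0 + t\<close> with \<open>t\<close> centred normal turns the kernel into the
  image of one fixed measure under a jointly measurable map.\<close>
lemma measurable_gaussian_response:
  fixes \<beta>0 :: "real^'p::finite"
  assumes "\<sigma>2 > 0"
  shows "(\<lambda>(h, x). distr (density lborel (normal_density (x \<bullet> \<beta>0) (sqrt \<sigma>2))) (hist_space (Suc j))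
            (\<lambda>y. h(j := (x, y)))) \<in> hist_space j \<Otimes>\<^sub>M borel \<rightarrow>\<^sub>M prob_algebra (hist_space (Suc j))"
proof -
  let ?N0 = "density lborel (normal_density 0 (sqrt \<sigma>2))"
  have s: "sqrt \<sigma>2 > 0" using assms by simp
  have N0: "?N0 \<in> space (prob_algebra lborel)"
    using prob_space_normal_density[OF s] by (simp add: space_prob_algebra)
  have g: "(\<lambda>w. distr ?N0 (hist_space (Suc j)) (\<lambda>t. (fst w)(j := (snd w, snd w \<bullet> \<beta>0 + t))))
      \<in> hist_space j \<Otimes>\<^sub>M borel \<rightarrow>\<^sub>M prob_algebra (hist_space (Suc j))"
    by (rule measurable_distr_prob_space2[OF measurable_const[OF N0]])
       (use measurable_hist_update[of j \<beta>0] in \<open>simp add: case_prod_beta'\<close>)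
  have shift: "distr ?N0 (hist_space (Suc j)) (\<lambda>t. h(j := (x, x \<bullet> \<beta>0 + t)))
      = distr (density lborel (normal_density (x \<bullet> \<beta>0) (sqrt \<sigma>2))) (hist_space (Suc j)) (\<lambda>y. h(j := (x, y)))"
    if "h \<in> space (hist_space j)" for h x
    unfolding density_normal_eq_distr_shift[OF s, of "x \<bullet> \<beta>0"]
    by (subst distr_distr) (auto simp: comp_def measurable_hist_update_at[OF that])
  show ?thesis
    by (rule measurable_cong[THEN iffD1, OF _ g]) (auto simp: space_pair_measure shift split_beta')
qed

lemma measurable_traj_step:
  assumes "valid_rule \<Lambda>" "\<sigma>2 > 0"
  shows "traj_step \<Lambda> \<beta>0 \<sigma>2 j \<in> hist_space j \<rightarrow>\<^sub>M prob_algebra (hist_space (Suc j))"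
  unfolding traj_step_def[abs_def]
  by (rule measurable_bind_prob_space2[OF _ measurable_gaussian_response[OF assms(2)]])
     (use assms(1) in \<open>simp add: valid_rule_def\<close>)

lemma valid_rule_prob_space:
  assumes "valid_rule \<Lambda>" "h \<in> space (hist_space j)"
  shows "prob_space (\<Lambda> j h)" and "sets (\<Lambda> j h) = sets borel"
proof -
  have "\<Lambda> j h \<in> space (prob_algebra borel)"
    using assms unfolding valid_rule_def by (auto dest: measurable_space)
  then show "prob_space (\<Lambda> j h)" and "sets (\<Lambda> j h) = sets borel"
    by (simp_all add: space_prob_algebra)
qed

lemma sets_traj:
  assumes "valid_rule \<Lambda>" "\<sigma>2 > 0"
  shows "sets (traj \<Lambda> \<beta>0 \<sigma>2 j) = sets (hist_space j)"
proof (induction j)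
  case (Suc j)
  have "traj_step \<Lambda> \<beta>0 \<sigma>2 j \<in> traj \<Lambda> \<beta>0 \<sigma>2 j \<rightarrow>\<^sub>M subprob_algebra (hist_space (Suc j))"
    using measurable_prob_algebraD[OF measurable_traj_step[OF assms]]
    by (simp add: measurable_cong_sets[OF Suc.IH refl])
  then show ?case
    unfolding traj_Suc_bind
    by (rule sets_bind[OF sets_kernel])
       (simp_all add: sets_eq_imp_space_eq[OF Suc.IH] space_hist_space_nonempty)
qed simp

lemma prob_space_traj:
  assumes "valid_rule \<Lambda>" "\<sigma>2 > 0"
  shows "prob_space (traj \<Lambda> \<beta>0 \<sigma>2 j)"
proof (induction j)
  case 0
  show ?case by (simp add: prob_space_return space_hist_space)
next
  case (Suc j)
  have K: "traj_step \<Lambda> \<beta>0 \<sigma>2 j \<in> traj \<Lambda> \<beta>0 \<sigma>2 j \<rightarrow>\<^sub>M prob_algebra (hist_space (Suc j))"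
    using measurable_traj_step[OF assms] by (simp add: measurable_cong_sets[OF sets_traj[OF assms] refl])
  show ?case
    unfolding traj_Suc_bind
    by (rule prob_space.prob_space_bind[OF Suc.IH _ measurable_prob_algebraD[OF K]])
       (use measurable_space[OF K] in \<open>auto simp: space_prob_algebra\<close>)
qed

lemma nn_integral_traj_step:
  fixes f :: "'p::finite hist \<Rightarrow> ennreal"
  assumes V: "valid_rule \<Lambda>" and s2: "\<sigma>2 > 0" and f: "f \<in> borel_measurable (hist_space (Suc j))"
    and h: "h \<in> space (hist_space j)"
  shows "(\<integral>\<^sup>+h'. f h' \<partial>traj_step \<Lambda> \<beta>0 \<sigma>2 j h) =
    (\<integral>\<^sup>+x. \<integral>\<^sup>+y. normal_density (x \<bullet> \<beta>0) (sqrt \<sigma>2) y * f (h(j := (x, y))) \<partial>lborel \<partial>\<Lambda> j h)"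
proof -
  let ?G = "\<lambda>x. distr (density lborel (normal_density (x \<bullet> \<beta>0) (sqrt \<sigma>2))) (hist_space (Suc j))
                (\<lambda>y. h(j := (x, y)))"
  have "?G \<in> borel \<rightarrow>\<^sub>M subprob_algebra (hist_space (Suc j))"
    using measurable_Pair2[OF measurable_prob_algebraD[OF measurable_gaussian_response[OF s2]] h]
    by simp
  then have G: "?G \<in> \<Lambda> j h \<rightarrow>\<^sub>M subprob_algebra (hist_space (Suc j))"
    by (simp add: measurable_cong_sets[OF valid_rule_prob_space(2)[OF V h] refl])
  have "(\<integral>\<^sup>+h'. f h' \<partial>traj_step \<Lambda> \<beta>0 \<sigma>2 j h) = (\<integral>\<^sup>+x. \<integral>\<^sup>+h'. f h' \<partial>?G x \<partial>\<Lambda> j h)"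
    unfolding traj_step_def by (rule nn_integral_bind[OF f G])
  also have "\<dots> = (\<integral>\<^sup>+x. \<integral>\<^sup>+y. normal_density (x \<bullet> \<beta>0) (sqrt \<sigma>2) y * f (h(j := (x, y))) \<partial>lborel \<partial>\<Lambda> j h)"
  proof (rule nn_integral_cong)
    fix x
    have upd: "(\<lambda>y. h(j := (x, y))) \<in> borel \<rightarrow>\<^sub>M hist_space (Suc j)"
      by (rule measurable_hist_update_at[OF h])
    have "(\<integral>\<^sup>+h'. f h' \<partial>?G x)
        = (\<integral>\<^sup>+y. f (h(j := (x, y))) \<partial>density lborel (normal_density (x \<bullet> \<beta>0) (sqrt \<sigma>2)))"
      by (rule nn_integral_distr) (use upd f in simp_all)
    also have "\<dots> = (\<integral>\<^sup>+y. normal_density (x \<bullet> \<beta>0) (sqrt \<sigma>2) y * f (h(j := (x, y))) \<partial>lborel)"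
      by (rule nn_integral_density) (use measurable_compose[OF upd f] in simp_all)
    finally show "(\<integral>\<^sup>+h'. f h' \<partial>?G x)
        = (\<integral>\<^sup>+y. normal_density (x \<bullet> \<beta>0) (sqrt \<sigma>2) y * f (h(j := (x, y))) \<partial>lborel)" .
  qed
  finally show ?thesis .
qed

lemma nn_integral_traj_Suc:
  fixes f :: "'p::finite hist \<Rightarrow> ennreal"
  assumes V: "valid_rule \<Lambda>" and s2: "\<sigma>2 > 0" and f: "f \<in> borel_measurable (hist_space (Suc j))"
  shows "(\<integral>\<^sup>+h. f h \<partial>traj \<Lambda> \<beta>0 \<sigma>2 (Suc j)) =
    (\<integral>\<^sup>+h. \<integral>\<^sup>+x. \<integral>\<^sup>+y. normal_density (x \<bullet> \<beta>0) (sqrt \<sigma>2) y * f (h(j := (x, y))) \<partial>lborel \<partial>\<Lambda> j h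
      \<partial>traj \<Lambda> \<beta>0 \<sigma>2 j)"
proof -
  have "traj_step \<Lambda> \<beta>0 \<sigma>2 j \<in> traj \<Lambda> \<beta>0 \<sigma>2 j \<rightarrow>\<^sub>M subprob_algebra (hist_space (Suc j))"
    using measurable_prob_algebraD[OF measurable_traj_step[OF V s2]]
    by (simp add: measurable_cong_sets[OF sets_traj[OF V s2] refl])
  then have "(\<integral>\<^sup>+h. f h \<partial>traj \<Lambda> \<beta>0 \<sigma>2 (Suc j))
      = (\<integral>\<^sup>+h. \<integral>\<^sup>+h'. f h' \<partial>traj_step \<Lambda> \<beta>0 \<sigma>2 j h \<partial>traj \<Lambda> \<beta>0 \<sigma>2 j)"
    unfolding traj_Suc_bind by (rule nn_integral_bind[OF f])
  also have "\<dots> = (\<integral>\<^sup>+h. \<integral>\<^sup>+x. \<integral>\<^sup>+y. normal_density (x \<bullet> \<beta>0) (sqrt \<sigma>2) y * f (h(j := (x, y)))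
      \<partial>lborel \<partial>\<Lambda> j h \<partial>traj \<Lambda> \<beta>0 \<sigma>2 j)"
    by (rule nn_integral_cong)
       (simp add: nn_integral_traj_step[OF V s2 f] sets_eq_imp_space_eq[OF sets_traj[OF V s2]])
  finally show ?thesis .
qed

section \<open>An exponential martingale for the noise scores\<close>

definition column_sqnorm :: "nat \<Rightarrow> 'p::finite hist \<Rightarrow> 'p \<Rightarrow> real" where
  "column_sqnorm n h k = (\<Sum>j<n. (fst (h j) $ k)\<^sup>2)"

definition noise_score :: "real^'p::finite \<Rightarrow> nat \<Rightarrow> 'p hist \<Rightarrow> 'p \<Rightarrow> real" where
  "noise_score \<beta>0 n h k = (\<Sum>j<n. fst (h j) $ k * (snd (h j) - fst (h j) \<bullet> \<beta>0))"

definition exp_martingale :: "real^'p::finite \<Rightarrow> real \<Rightarrow> real \<Rightarrow> 'p \<Rightarrow> nat \<Rightarrow> 'p hist \<Rightarrow> real" where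
  "exp_martingale \<beta>0 \<sigma>2 l k n h =
     exp (l * noise_score \<beta>0 n h k - l\<^sup>2 * \<sigma>2 * column_sqnorm n h k / 2)"

lemma measurable_hist_component:
  "i < n \<Longrightarrow> (\<lambda>h::'p::finite hist. h i) \<in> hist_space n \<rightarrow>\<^sub>M borel"
  unfolding hist_space_def by (intro measurable_component_singleton) auto

lemma borel_measurable_hist_continuous:
  assumes "i < n" "continuous_on UNIV g"
  shows "(\<lambda>h::'p::finite hist. g (h i) :: real) \<in> borel_measurable (hist_space n)"
  using measurable_compose[OF measurable_hist_component[OF assms(1)]]
    borel_measurable_continuous_onI[OF assms(2)] by blast

lemma borel_measurable_column_sqnorm[measurable]:
  "(\<lambda>h. column_sqnorm n h k) \<in> borel_measurable (hist_space n)"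
  unfolding column_sqnorm_def
  by (intro borel_measurable_sum borel_measurable_hist_continuous continuous_intros) auto

lemma borel_measurable_noise_score[measurable]:
  "(\<lambda>h. noise_score \<beta>0 n h k) \<in> borel_measurable (hist_space n)"
  unfolding noise_score_def
  by (intro borel_measurable_sum borel_measurable_hist_continuous continuous_intros) auto

lemma borel_measurable_exp_martingale[measurable]:
  "(\<lambda>h. exp_martingale \<beta>0 \<sigma>2 l k n h) \<in> borel_measurable (hist_space n)"
  unfolding exp_martingale_def by measurable

lemma nn_integral_normal_exp_tilt:
  assumes "s > 0"
  shows "(\<integral>\<^sup>+y. normal_density \<mu> s y * ennreal (exp (a * (y - \<mu>) - a\<^sup>2 * s\<^sup>2 / 2)) \<partial>lborel) = 1"
proof -
  have "normal_density \<mu> s y * exp (a * (y - \<mu>) - a\<^sup>2 * s\<^sup>2 / 2) = normal_density (\<mu> + a * s\<^sup>2) s y" for y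
  proof -
    have "- (y - \<mu>)\<^sup>2 / (2 * s\<^sup>2) + (a * (y - \<mu>) - a\<^sup>2 * s\<^sup>2 / 2) = - (y - (\<mu> + a * s\<^sup>2))\<^sup>2 / (2 * s\<^sup>2)"
      using assms by (simp add: field_simps power2_eq_square)
    then show ?thesis
      unfolding normal_density_def by (simp add: mult.assoc exp_add[symmetric])
  qed
  then have "(\<integral>\<^sup>+y. normal_density \<mu> s y * ennreal (exp (a * (y - \<mu>) - a\<^sup>2 * s\<^sup>2 / 2)) \<partial>lborel)
      = (\<integral>\<^sup>+y. normal_density (\<mu> + a * s\<^sup>2) s y \<partial>lborel)"
    by (intro nn_integral_cong) (simp add: ennreal_mult'[symmetric])
  also have "\<dots> = 1"
    using prob_space.emeasure_space_1[OF prob_space_normal_density[OF assms]]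
    by (simp add: emeasure_density)
  finally show ?thesis .
qed

lemma exp_martingale_Suc:
  assumes "\<sigma>2 > 0"
  shows "exp_martingale \<beta>0 \<sigma>2 l k (Suc j) (h(j := (x, y))) = exp_martingale \<beta>0 \<sigma>2 l k j h *
           exp (l * x $ k * (y - x \<bullet> \<beta>0) - (l * x $ k)\<^sup>2 * (sqrt \<sigma>2)\<^sup>2 / 2)"
proof -
  have [simp]: "(\<Sum>i<j. f ((h(j := v)) i)) = (\<Sum>i<j. f (h i))" for f :: "_ \<Rightarrow> real" and v
    by (rule sum.cong) auto
  have N: "column_sqnorm (Suc j) (h(j := (x, y))) k = column_sqnorm j h k + (x $ k)\<^sup>2"
    and S: "noise_score \<beta>0 (Suc j) (h(j := (x, y))) k = noise_score \<beta>0 j h k + x $ k * (y - x \<bullet> \<beta>0)"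
    by (simp_all add: column_sqnorm_def noise_score_def)
  show ?thesis
    unfolding exp_martingale_def N S using assms
    by (simp add: exp_add[symmetric] algebra_simps power2_eq_square)
qed

lemma nn_integral_exp_martingale_step:
  fixes \<Lambda> :: "nat \<Rightarrow> 'p::finite hist \<Rightarrow> (real^'p) measure"
  assumes V: "valid_rule \<Lambda>" and s2: "\<sigma>2 > 0" and h: "h \<in> space (hist_space j)"
  shows "(\<integral>\<^sup>+x. \<integral>\<^sup>+y. normal_density (x \<bullet> \<beta>0) (sqrt \<sigma>2) y *
           ennreal (exp_martingale \<beta>0 \<sigma>2 l k (Suc j) (h(j := (x, y)))) \<partial>lborel \<partial>\<Lambda> j h)
         = exp_martingale \<beta>0 \<sigma>2 l k j h"
proof -
  have "(\<integral>\<^sup>+y. normal_density (x \<bullet> \<beta>0) (sqrt \<sigma>2) y *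
      ennreal (exp_martingale \<beta>0 \<sigma>2 l k (Suc j) (h(j := (x, y)))) \<partial>lborel)
    = exp_martingale \<beta>0 \<sigma>2 l k j h" for x
  proof -
    let ?tilt = "\<lambda>y. exp (l * x $ k * (y - x \<bullet> \<beta>0) - (l * x $ k)\<^sup>2 * (sqrt \<sigma>2)\<^sup>2 / 2)"
    have "(\<integral>\<^sup>+y. normal_density (x \<bullet> \<beta>0) (sqrt \<sigma>2) y *
        ennreal (exp_martingale \<beta>0 \<sigma>2 l k (Suc j) (h(j := (x, y)))) \<partial>lborel)
      = (\<integral>\<^sup>+y. exp_martingale \<beta>0 \<sigma>2 l k j h *
          (normal_density (x \<bullet> \<beta>0) (sqrt \<sigma>2) y * ennreal (?tilt y)) \<partial>lborel)"
      by (intro nn_integral_cong)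
         (simp only: exp_martingale_Suc[OF s2], simp add: ennreal_mult' exp_martingale_def mult_ac)
    also have "\<dots> = exp_martingale \<beta>0 \<sigma>2 l k j h"
      using nn_integral_normal_exp_tilt[of "sqrt \<sigma>2" "x \<bullet> \<beta>0" "l * x $ k"] s2
      by (simp add: nn_integral_cmult)
    finally show ?thesis .
  qed
  then show ?thesis
    by (simp add: prob_space.emeasure_space_1[OF valid_rule_prob_space(1)[OF V h]])
qed

lemma nn_integral_exp_martingale:
  fixes \<Lambda> :: "nat \<Rightarrow> 'p::finite hist \<Rightarrow> (real^'p) measure"
  assumes V: "valid_rule \<Lambda>" and s2: "\<sigma>2 > 0"
  shows "(\<integral>\<^sup>+h. exp_martingale \<beta>0 \<sigma>2 l k n h \<partial>traj \<Lambda> \<beta>0 \<sigma>2 n) = 1"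
proof (induction n)
  case 0
  have "(\<lambda>_. undefined) \<in> space (hist_space 0 :: 'p hist measure)" by (simp add: space_hist_space)
  then show ?case by (simp add: nn_integral_return exp_martingale_def column_sqnorm_def noise_score_def)
next
  case (Suc j)
  have "(\<integral>\<^sup>+h. exp_martingale \<beta>0 \<sigma>2 l k (Suc j) h \<partial>traj \<Lambda> \<beta>0 \<sigma>2 (Suc j))
      = (\<integral>\<^sup>+h. \<integral>\<^sup>+x. \<integral>\<^sup>+y. normal_density (x \<bullet> \<beta>0) (sqrt \<sigma>2) y *
           ennreal (exp_martingale \<beta>0 \<sigma>2 l k (Suc j) (h(j := (x, y)))) \<partial>lborel \<partial>\<Lambda> j h
         \<partial>traj \<Lambda> \<beta>0 \<sigma>2 j)"
    by (rule nn_integral_traj_Suc[OF V s2]) measurable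
  also have "\<dots> = (\<integral>\<^sup>+h. exp_martingale \<beta>0 \<sigma>2 l k j h \<partial>traj \<Lambda> \<beta>0 \<sigma>2 j)"
    by (rule nn_integral_cong)
       (simp add: nn_integral_exp_martingale_step[OF V s2] sets_eq_imp_space_eq[OF sets_traj[OF V s2]])
  also have "\<dots> = 1" by (rule Suc.IH)
  finally show ?case .
qed

lemma sets_traj_noise_score_ge:
  assumes "valid_rule \<Lambda>" "\<sigma>2 > 0"
  shows "{h \<in> space (traj \<Lambda> \<beta>0 \<sigma>2 n). column_sqnorm n h k > r \<and> s * noise_score \<beta>0 n h k \<ge> \<delta> * column_sqnorm n h k}
           \<in> sets (traj \<Lambda> \<beta>0 \<sigma>2 n)"
proof -
  have sets_P: "sets (traj \<Lambda> \<beta>0 \<sigma>2 n) = sets (hist_space n)" by (rule sets_traj[OF assms])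
  have "{h \<in> space (traj \<Lambda> \<beta>0 \<sigma>2 n). column_sqnorm n h k > r \<and> s * noise_score \<beta>0 n h k \<ge> \<delta> * column_sqnorm n h k}
      = {h \<in> space (hist_space n). r < column_sqnorm n h k} \<inter>
        {h \<in> space (hist_space n). \<delta> * column_sqnorm n h k \<le> s * noise_score \<beta>0 n h k}"
    unfolding sets_eq_imp_space_eq[OF sets_P] by blast
  also have "\<dots> \<in> sets (hist_space n)"
    by (intro sets.Int borel_measurable_less borel_measurable_le borel_measurable_times
        borel_measurable_const borel_measurable_column_sqnorm borel_measurable_noise_score)
  finally show ?thesis unfolding sets_P .
qed

text \<open>Chernoff bound: Markov's inequality applied to the exponential martingale with
  parameter \<open>s \<delta> / \<sigma>2\<close>.\<close>
lemma emeasure_noise_score_ge_le: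
  fixes \<Lambda> :: "nat \<Rightarrow> 'p::finite hist \<Rightarrow> (real^'p) measure"
  assumes V: "valid_rule \<Lambda>" and s2: "\<sigma>2 > 0" and "\<delta> > 0" and "r \<ge> 0" and s: "s\<^sup>2 = 1"
  shows "emeasure (traj \<Lambda> \<beta>0 \<sigma>2 n) {h \<in> space (traj \<Lambda> \<beta>0 \<sigma>2 n).
           column_sqnorm n h k > r \<and> s * noise_score \<beta>0 n h k \<ge> \<delta> * column_sqnorm n h k}
         \<le> exp (- (r * \<delta>\<^sup>2 / (2 * \<sigma>2)))"
proof -
  let ?P = "traj \<Lambda> \<beta>0 \<sigma>2 n"
  let ?A = "{h \<in> space ?P. column_sqnorm n h k > r \<and> s * noise_score \<beta>0 n h k \<ge> \<delta> * column_sqnorm n h k}"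
  let ?c = "r * \<delta>\<^sup>2 / (2 * \<sigma>2)"
  let ?M = "exp_martingale \<beta>0 \<sigma>2 (s * \<delta> / \<sigma>2) k n"
  have sets_P: "sets ?P = sets (hist_space n)" by (rule sets_traj[OF V s2])
  have A: "?A \<in> sets ?P" by (rule sets_traj_noise_score_ge[OF V s2])
  have "indicator ?A h \<le> ennreal (exp (- ?c)) * ennreal (?M h)" for h
  proof (cases "h \<in> ?A")
    case True
    let ?N = "column_sqnorm n h k"
    have "\<delta>\<^sup>2 * ?N / \<sigma>2 \<le> (\<delta> / \<sigma>2) * (s * noise_score \<beta>0 n h k)"
      using True mult_left_mono[of "\<delta> * ?N" "s * noise_score \<beta>0 n h k" "\<delta> / \<sigma>2"] \<open>\<delta> > 0\<close> s2
      by (simp add: power2_eq_square)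
    moreover have "(s * \<delta> / \<sigma>2)\<^sup>2 * \<sigma>2 * ?N / 2 = \<delta>\<^sup>2 * ?N / \<sigma>2 / 2"
      using s s2 by (simp add: power_mult_distrib power_divide field_simps power2_eq_square)
    moreover have "?c \<le> \<delta>\<^sup>2 * ?N / \<sigma>2 / 2"
      using True s2 \<open>\<delta> > 0\<close> by (simp add: field_simps mult_left_mono)
    ultimately have "0 \<le> - ?c + (s * \<delta> / \<sigma>2 * noise_score \<beta>0 n h k - (s * \<delta> / \<sigma>2)\<^sup>2 * \<sigma>2 * ?N / 2)"
      by (simp add: field_simps)
    then have "1 \<le> exp (- ?c) * ?M h"
      unfolding exp_martingale_def by (simp add: exp_add[symmetric])
    then have "ennreal 1 \<le> ennreal (exp (- ?c) * ?M h)" by (rule ennreal_leI)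
    then show ?thesis using True by (simp add: ennreal_mult')
  qed simp
  then have "emeasure ?P ?A \<le> (\<integral>\<^sup>+h. ennreal (exp (- ?c)) * ennreal (?M h) \<partial>?P)"
    using A by (simp add: nn_integral_mono flip: nn_integral_indicator)
  also have "\<dots> = exp (- ?c) * (\<integral>\<^sup>+h. ?M h \<partial>?P)"
    by (rule nn_integral_cmult) (simp add: measurable_cong_sets[OF sets_P refl])
  finally show ?thesis by (simp add: nn_integral_exp_martingale[OF V s2])
qed

section \<open>Products of normal densities\<close>

lemma nn_integral_lborel_prod_cart:
  fixes F :: "'p::finite \<Rightarrow> real \<Rightarrow> ennreal"
  assumes [measurable]: "\<And>k. F k \<in> borel_measurable borel"
  shows "(\<integral>\<^sup>+\<beta>. (\<Prod>k\<in>UNIV. F k (\<beta> $ k)) \<partial>(lborel :: (real^'p) measure)) = (\<Prod>k\<in>UNIV. \<integral>\<^sup>+x. F k x \<partial>lborel)"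
proof -
  have inj: "inj (\<lambda>k::'p. axis k (1::real))" by (auto simp: inj_def axis_eq_axis)
  have Basis: "(Basis :: (real^'p) set) = range (\<lambda>k. axis k 1)" by (auto simp: Basis_vec_def)
  define G where "G b = F (inv (\<lambda>k. axis k (1::real)) b)" for b :: "real^'p"
  have G: "G (axis k 1) = F k" for k by (simp add: G_def inv_f_f[OF inj])
  have "(\<integral>\<^sup>+\<beta>. (\<Prod>b\<in>Basis. G b (\<beta> \<bullet> b)) \<partial>(lborel :: (real^'p) measure)) = (\<Prod>b\<in>Basis. \<integral>\<^sup>+x. G b x \<partial>lborel)"
    by (rule nn_integral_lborel_prod) (auto simp: G_def)
  then show ?thesis
    unfolding Basis by (simp add: prod.reindex[OF inj] G cart_eq_inner_axis)
qed

definition prod_normal_density :: "real^'p::finite \<Rightarrow> ('p \<Rightarrow> real) \<Rightarrow> real^'p \<Rightarrow> real" where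
  "prod_normal_density m s \<beta> = (\<Prod>k\<in>UNIV. normal_density (m $ k) (s k) (\<beta> $ k))"

lemma prod_normal_density_nonneg: "prod_normal_density m s \<beta> \<ge> 0"
  unfolding prod_normal_density_def by (intro prod_nonneg) auto

lemma borel_measurable_prod_normal_density[measurable]: "prod_normal_density m s \<in> borel_measurable borel"
  unfolding prod_normal_density_def[abs_def] normal_density_def by measurable

lemma prod_normal_density_eq:
  "prod_normal_density m s \<beta> =
     (\<Prod>k\<in>UNIV. 1 / sqrt (2 * pi * (s k)\<^sup>2)) * exp (- (\<Sum>k\<in>UNIV. (\<beta> $ k - m $ k)\<^sup>2 / (s k)\<^sup>2) / 2)"
proof -
  have "prod_normal_density m s \<beta>
      = (\<Prod>k\<in>UNIV. 1 / sqrt (2 * pi * (s k)\<^sup>2) * exp (- ((\<beta> $ k - m $ k)\<^sup>2 / (s k)\<^sup>2) / 2))"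
    unfolding prod_normal_density_def
    by (intro prod.cong refl) (simp add: normal_density_def divide_divide_eq_left mult.commute)
  also have "\<dots> = (\<Prod>k\<in>UNIV. 1 / sqrt (2 * pi * (s k)\<^sup>2)) *
      exp (\<Sum>k\<in>UNIV. - ((\<beta> $ k - m $ k)\<^sup>2 / (s k)\<^sup>2) / 2)"
    by (simp only: prod.distrib exp_sum finite_class.finite_UNIV)
  also have "(\<Sum>k\<in>UNIV. - ((\<beta> $ k - m $ k)\<^sup>2 / (s k)\<^sup>2) / 2) = - (\<Sum>k\<in>UNIV. (\<beta> $ k - m $ k)\<^sup>2 / (s k)\<^sup>2) / 2"
    by (simp only: sum_divide_distrib[symmetric] sum_negf)
  finally show ?thesis .
qed

lemma nn_integral_normal_density: "s > 0 \<Longrightarrow> (\<integral>\<^sup>+x. normal_density \<mu> s x \<partial>lborel) = 1"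
  using prob_space.emeasure_space_1[OF prob_space_normal_density] by (simp add: emeasure_density)

lemma nn_integral_prod_normal_density:
  assumes "\<And>k. s k > 0"
  shows "(\<integral>\<^sup>+\<beta>. prod_normal_density m s \<beta> \<partial>lborel) = 1"
proof -
  have "(\<integral>\<^sup>+\<beta>. (\<Prod>k\<in>UNIV. ennreal (normal_density (m $ k) (s k) (\<beta> $ k))) \<partial>lborel)
      = (\<Prod>k\<in>UNIV. \<integral>\<^sup>+x. normal_density (m $ k) (s k) x \<partial>lborel)"
    by (rule nn_integral_lborel_prod_cart) measurable
  then show ?thesis
    by (simp add: prod_normal_density_def prod_ennreal nn_integral_normal_density assms)
qed

lemma
  assumes "\<And>k. s k > 0"
  shows integrable_prod_normal_density: "integrable lborel (prod_normal_density m s)"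
    and integral_prod_normal_density: "(\<integral>\<beta>. prod_normal_density m s \<beta> \<partial>lborel) = 1"
proof -
  show "integrable lborel (prod_normal_density m s)"
    by (rule integrableI_nonneg)
       (auto simp: prod_normal_density_nonneg nn_integral_prod_normal_density[OF assms])
  then show "(\<integral>\<beta>. prod_normal_density m s \<beta> \<partial>lborel) = 1"
    by (subst integral_eq_nn_integral)
       (auto simp: prod_normal_density_nonneg nn_integral_prod_normal_density[OF assms])
qed

lemma nn_integral_normal_tail_le:
  assumes "s > 0" "t > 0"
  shows "(\<integral>\<^sup>+x. ennreal (normal_density \<mu> s x) * indicator {x. t \<le> \<bar>x - \<mu>\<bar>} x \<partial>lborel) \<le> s\<^sup>2 / t\<^sup>2"
proof -
  have "ennreal (normal_density \<mu> s x) * indicator {x. t \<le> \<bar>x - \<mu>\<bar>} x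
      \<le> ennreal (normal_density \<mu> s x * (x - \<mu>) ^ (2 * 1) / t\<^sup>2)" for x
  proof (cases "t \<le> \<bar>x - \<mu>\<bar>")
    case True
    then have "1 \<le> (x - \<mu>)\<^sup>2 / t\<^sup>2"
      using assms abs_le_square_iff[of t "x - \<mu>"] by simp
    then have "normal_density \<mu> s x * 1 \<le> normal_density \<mu> s x * ((x - \<mu>)\<^sup>2 / t\<^sup>2)"
      by (rule mult_left_mono) simp
    then show ?thesis using True by (simp add: ennreal_leI)
  qed simp
  then have "(\<integral>\<^sup>+x. ennreal (normal_density \<mu> s x) * indicator {x. t \<le> \<bar>x - \<mu>\<bar>} x \<partial>lborel)
      \<le> (\<integral>\<^sup>+x. ennreal (normal_density \<mu> s x * (x - \<mu>) ^ (2 * 1) / t\<^sup>2) \<partial>lborel)"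
    by (intro nn_integral_mono)
  also have "\<dots> = ennreal (s\<^sup>2 / t\<^sup>2)"
  proof -
    have "has_bochner_integral lborel (\<lambda>x. normal_density \<mu> s x * (x - \<mu>) ^ (2 * 1) / t\<^sup>2) (s\<^sup>2 / t\<^sup>2)"
      using has_bochner_integral_divide_zero[OF normal_moment_even[OF assms(1), of \<mu> 1]]
      by simp
    then show ?thesis
      by (subst nn_integral_eq_integral) (auto simp: has_bochner_integral_iff)
  qed
  finally show ?thesis .
qed

lemma nn_integral_prod_normal_density_tail_le:
  fixes m :: "real^'p::finite"
  assumes s: "\<And>k. s k > 0" and t: "t > 0"
  shows "(\<integral>\<^sup>+\<beta>. ennreal (prod_normal_density m s \<beta>) * indicator {\<beta>. t \<le> \<bar>\<beta> $ k - m $ k\<bar>} \<beta> \<partial>lborel)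
           \<le> (s k)\<^sup>2 / t\<^sup>2"
proof -
  define F where "F k' x = ennreal (normal_density (m $ k') (s k') x) *
    (if k' = k then indicator {x. t \<le> \<bar>x - m $ k\<bar>} x else 1)" for k' x
  have F: "F k' \<in> borel_measurable borel" for k'
    unfolding F_def by measurable
  have "ennreal (prod_normal_density m s \<beta>) * indicator {\<beta>. t \<le> \<bar>\<beta> $ k - m $ k\<bar>} \<beta>
      = (\<Prod>k'\<in>UNIV. F k' (\<beta> $ k'))" for \<beta> :: "real^'p"
  proof -
    have "(\<Prod>k'\<in>UNIV. F k' (\<beta> $ k')) = (\<Prod>k'\<in>UNIV. ennreal (normal_density (m $ k') (s k') (\<beta> $ k'))) *
        (\<Prod>k'\<in>UNIV. (if k' = k then indicator {x. t \<le> \<bar>x - m $ k\<bar>} (\<beta> $ k') else (1::ennreal)))"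
      unfolding F_def by (rule prod.distrib)
    then show ?thesis
      unfolding prod_normal_density_def by (simp add: prod_ennreal indicator_def)
  qed
  then have "(\<integral>\<^sup>+\<beta>. ennreal (prod_normal_density m s \<beta>) * indicator {\<beta>. t \<le> \<bar>\<beta> $ k - m $ k\<bar>} \<beta> \<partial>lborel)
      = (\<Prod>k'\<in>UNIV. \<integral>\<^sup>+x. F k' x \<partial>lborel)"
    by (simp add: nn_integral_lborel_prod_cart[OF F])
  also have "\<dots> = (\<integral>\<^sup>+x. F k x \<partial>lborel) * (\<Prod>k'\<in>UNIV - {k}. \<integral>\<^sup>+x. F k' x \<partial>lborel)"
    by (subst prod.remove[of UNIV k]) auto
  also have "(\<Prod>k'\<in>UNIV - {k}. \<integral>\<^sup>+x. F k' x \<partial>lborel) = 1"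
    by (intro prod.neutral) (simp add: F_def nn_integral_normal_density s)
  also have "(\<integral>\<^sup>+x. F k x \<partial>lborel) \<le> (s k)\<^sup>2 / t\<^sup>2"
    unfolding F_def using nn_integral_normal_tail_le[OF s t, of "m $ k"] by simp
  finally show ?thesis by simp
qed

lemma integral_prod_normal_density_tail_le:
  fixes m :: "real^'p::finite"
  assumes s: "\<And>k. s k > 0" and t: "t > 0"
  shows "integrable lborel (\<lambda>\<beta>. prod_normal_density m s \<beta> * indicator {\<beta>. t \<le> \<bar>\<beta> $ k - m $ k\<bar>} \<beta>)"
    and "(\<integral>\<beta>. prod_normal_density m s \<beta> * indicator {\<beta>. t \<le> \<bar>\<beta> $ k - m $ k\<bar>} \<beta> \<partial>lborel) \<le> (s k)\<^sup>2 / t\<^sup>2"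
proof -
  let ?T = "{\<beta>::real^'p. t \<le> \<bar>\<beta> $ k - m $ k\<bar>}"
  have T: "?T \<in> sets lborel" by measurable
  show I: "integrable lborel (\<lambda>\<beta>. prod_normal_density m s \<beta> * indicator ?T \<beta>)"
    using integrable_mult_indicator[OF T integrable_prod_normal_density[OF s]] by (simp add: mult.commute)
  have "ennreal (\<integral>\<beta>. prod_normal_density m s \<beta> * indicator ?T \<beta> \<partial>lborel)
      = (\<integral>\<^sup>+\<beta>. ennreal (prod_normal_density m s \<beta> * indicator ?T \<beta>) \<partial>lborel)"
    by (rule nn_integral_eq_integral[OF I, symmetric]) (simp add: prod_normal_density_nonneg)
  also have "\<dots> = (\<integral>\<^sup>+\<beta>. ennreal (prod_normal_density m s \<beta>) * indicator ?T \<beta> \<partial>lborel)"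
    by (intro nn_integral_cong) (simp add: indicator_def)
  also have "\<dots> \<le> (s k)\<^sup>2 / t\<^sup>2" by (rule nn_integral_prod_normal_density_tail_le[OF s t])
  finally show "(\<integral>\<beta>. prod_normal_density m s \<beta> * indicator ?T \<beta> \<partial>lborel) \<le> (s k)\<^sup>2 / t\<^sup>2"
    by (simp add: ennreal_le_iff)
qed

section \<open>Total variation and reweighting by the prior\<close>

lemma measure_density_eq_integral:
  fixes f :: "'a::euclidean_space \<Rightarrow> real"
  assumes f: "integrable lborel f" "\<And>x. f x \<ge> 0" and A: "A \<in> sets lborel"
  shows "measure (density lborel f) A = (\<integral>x. f x * indicator A x \<partial>lborel)"
proof -
  have fA: "integrable lborel (\<lambda>x. f x * indicator A x)"
    using integrable_mult_indicator[OF A f(1)] by (simp add: mult.commute)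
  have "emeasure (density lborel f) A = (\<integral>\<^sup>+x. ennreal (f x * indicator A x) \<partial>lborel)"
    using f A by (simp add: emeasure_density ennreal_mult' ennreal_indicator mult.commute)
  also have "\<dots> = ennreal (\<integral>x. f x * indicator A x \<partial>lborel)"
    using fA f(2) by (intro nn_integral_eq_integral) auto
  finally show ?thesis
    using f(2) by (simp add: measure_def integral_nonneg_AE)
qed

lemma tv_dist_density_le_L1:
  fixes f g :: "'a::euclidean_space \<Rightarrow> real"
  assumes f: "integrable lborel f" "\<And>x. f x \<ge> 0" and g: "integrable lborel g" "\<And>x. g x \<ge> 0"
  shows "tv_dist (density lborel f) (density lborel g) \<le> (\<integral>x. \<bar>f x - g x\<bar> \<partial>lborel)"
  unfolding tv_dist_def
proof (rule cSUP_least)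
  fix A assume "A \<in> sets (density lborel f)"
  then have A: "A \<in> sets lborel" by simp
  have iA: "integrable lborel (\<lambda>x. h x * indicator A x)" if "integrable lborel h" for h :: "'a \<Rightarrow> real"
    using integrable_mult_indicator[OF A that] by (simp add: mult.commute)
  have "\<bar>measure (density lborel f) A - measure (density lborel g) A\<bar>
      = \<bar>\<integral>x. (f x - g x) * indicator A x \<partial>lborel\<bar>"
    using iA[OF f(1)] iA[OF g(1)]
    by (simp add: measure_density_eq_integral[OF f A] measure_density_eq_integral[OF g A] left_diff_distrib)
  also have "\<dots> \<le> (\<integral>x. \<bar>(f x - g x) * indicator A x\<bar> \<partial>lborel)"
    by (rule integral_abs_bound)
  also have "\<dots> \<le> (\<integral>x. \<bar>f x - g x\<bar> \<partial>lborel)"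
    using f g iA by (intro integral_mono) (auto simp: indicator_def intro!: integrable_abs)
  finally show "\<bar>measure (density lborel f) A - measure (density lborel g) A\<bar> \<le> (\<integral>x. \<bar>f x - g x\<bar> \<partial>lborel)" .
qed (metis empty_iff sets.top)

lemma integrable_bounded_mult:
  fixes f g :: "'a \<Rightarrow> real"
  assumes g: "integrable M g" and f: "f \<in> borel_measurable M" and bound: "\<And>x. \<bar>f x\<bar> \<le> B"
  shows "integrable M (\<lambda>x. f x * g x)"
proof (rule Bochner_Integration.integrable_bound[where f="\<lambda>x. B * g x"])
  have "\<bar>f x\<bar> * \<bar>g x\<bar> \<le> \<bar>B\<bar> * \<bar>g x\<bar>" for x
    using bound[of x] by (intro mult_right_mono) auto
  then show "AE x in M. norm (f x * g x) \<le> norm (B * g x)"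
    by (simp add: abs_mult)
qed (use f g in auto)

lemma L1_dist_prior_reweighting_le:
  fixes \<pi> g :: "'a::euclidean_space \<Rightarrow> real"
  assumes g0: "\<And>\<beta>. g \<beta> \<ge> 0" and gi: "integrable lborel g"
    and g1: "(\<integral>\<beta>. g \<beta> \<partial>lborel) = 1"
    and pm[measurable]: "\<pi> \<in> borel_measurable borel" and pB: "\<And>\<beta>. \<bar>\<pi> \<beta>\<bar> \<le> B" and p0: "\<pi>0 > 0"
    and D: "(\<integral>\<beta>. g \<beta> * \<bar>\<pi> \<beta> - \<pi>0\<bar> \<partial>lborel) \<le> D" and D_le: "D \<le> \<pi>0 / 2"
  shows "(\<integral>\<beta>. \<pi> \<beta> * g \<beta> \<partial>lborel) \<ge> \<pi>0 / 2"
    and "(\<integral>\<beta>. \<bar>\<pi> \<beta> * g \<beta> / (\<integral>b. \<pi> b * g b \<partial>lborel) - g \<beta>\<bar> \<partial>lborel) \<le> 4 * D / \<pi>0"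
proof -
  have i1: "integrable lborel (\<lambda>\<beta>. \<pi> \<beta> * g \<beta>)"
    by (rule integrable_bounded_mult[OF gi _ pB]) measurable
  have "\<bar>\<bar>\<pi> \<beta> - \<pi>0\<bar>\<bar> \<le> B + \<bar>\<pi>0\<bar>" for \<beta> using pB[of \<beta>] by linarith
  from integrable_bounded_mult[OF gi _ this] have i2: "integrable lborel (\<lambda>\<beta>. g \<beta> * \<bar>\<pi> \<beta> - \<pi>0\<bar>)"
    by (simp add: mult.commute)
  define Z where "Z = (\<integral>\<beta>. \<pi> \<beta> * g \<beta> \<partial>lborel)"
  have "\<pi>0 - Z = (\<integral>\<beta>. g \<beta> * (\<pi>0 - \<pi> \<beta>) \<partial>lborel)"
    unfolding Z_def using i1 gi g1 by (simp add: right_diff_distrib mult.commute)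
  then have "\<bar>\<pi>0 - Z\<bar> \<le> (\<integral>\<beta>. g \<beta> * \<bar>\<pi> \<beta> - \<pi>0\<bar> \<partial>lborel)"
    using integral_abs_bound[of lborel "\<lambda>\<beta>. g \<beta> * (\<pi>0 - \<pi> \<beta>)"] g0
    by (simp add: abs_mult abs_minus_commute)
  then have Z: "\<bar>\<pi>0 - Z\<bar> \<le> D" using D by linarith
  then show "(\<integral>\<beta>. \<pi> \<beta> * g \<beta> \<partial>lborel) \<ge> \<pi>0 / 2" unfolding Z_def[symmetric] using D_le by linarith
  have Z_pos: "Z > 0" using Z D_le p0 by linarith
  have "\<bar>\<pi> \<beta> * g \<beta> / Z - g \<beta>\<bar> \<le> (g \<beta> * \<bar>\<pi> \<beta> - \<pi>0\<bar> + D * g \<beta>) / Z" for \<beta>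
  proof -
    have "\<pi> \<beta> * g \<beta> / Z - g \<beta> = g \<beta> * (\<pi> \<beta> - Z) / Z"
      using Z_pos by (simp add: field_simps)
    then have "\<bar>\<pi> \<beta> * g \<beta> / Z - g \<beta>\<bar> = g \<beta> * \<bar>\<pi> \<beta> - Z\<bar> / Z"
      using Z_pos g0[of \<beta>] by (simp add: abs_mult abs_divide)
    also have "\<dots> \<le> g \<beta> * (\<bar>\<pi> \<beta> - \<pi>0\<bar> + D) / Z"
      using Z_pos g0[of \<beta>] Z by (intro divide_right_mono mult_left_mono) auto
    finally show ?thesis by (simp add: algebra_simps)
  qed
  then have "(\<integral>\<beta>. \<bar>\<pi> \<beta> * g \<beta> / Z - g \<beta>\<bar> \<partial>lborel) \<le> (\<integral>\<beta>. (g \<beta> * \<bar>\<pi> \<beta> - \<pi>0\<bar> + D * g \<beta>) / Z \<partial>lborel)"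
    using i1 i2 gi by (intro integral_mono) auto
  also have "\<dots> = ((\<integral>\<beta>. g \<beta> * \<bar>\<pi> \<beta> - \<pi>0\<bar> \<partial>lborel) + D) / Z"
    using i2 gi g1 by simp
  also have "\<dots> \<le> (D + D) / (\<pi>0 / 2)"
    using D Z Z_pos D_le p0 by (intro frac_le) auto
  finally show "(\<integral>\<beta>. \<bar>\<pi> \<beta> * g \<beta> / (\<integral>b. \<pi> b * g b \<partial>lborel) - g \<beta>\<bar> \<partial>lborel) \<le> 4 * D / \<pi>0"
    unfolding Z_def[symmetric] by (simp add: field_simps)
qed

lemma abs_diff_le_box_tails:
  fixes \<pi> :: "real^'p::finite \<Rightarrow> real" and m :: "real^'p"
  assumes pB: "\<And>\<beta>. \<bar>\<pi> \<beta>\<bar> \<le> B" and p0B: "\<bar>\<pi>0\<bar> \<le> B"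
    and near: "\<And>\<beta>. (\<forall>k. \<bar>\<beta> $ k - m $ k\<bar> < t) \<Longrightarrow> \<bar>\<pi> \<beta> - \<pi>0\<bar> \<le> \<omega>" and "\<omega> \<ge> 0"
  shows "\<bar>\<pi> \<beta> - \<pi>0\<bar> \<le> \<omega> + 2 * B * (\<Sum>k\<in>UNIV. indicator {\<beta>. t \<le> \<bar>\<beta> $ k - m $ k\<bar>} \<beta>)"
proof (cases "\<forall>k. \<bar>\<beta> $ k - m $ k\<bar> < t")
  case True
  have "0 \<le> 2 * B * (\<Sum>k\<in>UNIV. indicator {\<beta>. t \<le> \<bar>\<beta> $ k - m $ k\<bar>} \<beta> :: real)"
    using p0B by (intro mult_nonneg_nonneg sum_nonneg) auto
  moreover have "\<bar>\<pi> \<beta> - \<pi>0\<bar> \<le> \<omega>" using near True by blast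
  ultimately show ?thesis by linarith
next
  case False
  then obtain k where k: "t \<le> \<bar>\<beta> $ k - m $ k\<bar>" by (auto simp: not_less)
  have "\<bar>\<pi> \<beta> - \<pi>0\<bar> \<le> 2 * B * indicator {\<beta>. t \<le> \<bar>\<beta> $ k - m $ k\<bar>} \<beta>"
    using k pB[of \<beta>] p0B by simp
  also have "\<dots> \<le> 2 * B * (\<Sum>k\<in>UNIV. indicator {\<beta>. t \<le> \<bar>\<beta> $ k - m $ k\<bar>} \<beta>)"
    using p0B by (intro mult_left_mono member_le_sum) auto
  finally show ?thesis using \<open>\<omega> \<ge> 0\<close> by linarith
qed

text \<open>Outside the box, Chebyshev's inequality bounds the mass of each coordinate tail.\<close>
lemma integral_prod_normal_density_abs_diff_le:
  fixes m :: "real^'p::finite" and \<pi> :: "real^'p \<Rightarrow> real"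
  assumes s: "\<And>k. s k > 0" and sV: "\<And>k. (s k)\<^sup>2 \<le> V" and t: "t > 0"
    and pm[measurable]: "\<pi> \<in> borel_measurable borel" and pB: "\<And>\<beta>. \<bar>\<pi> \<beta>\<bar> \<le> B" and p0B: "\<bar>\<pi>0\<bar> \<le> B"
    and near: "\<And>\<beta>. (\<forall>k. \<bar>\<beta> $ k - m $ k\<bar> < t) \<Longrightarrow> \<bar>\<pi> \<beta> - \<pi>0\<bar> \<le> \<omega>" and "\<omega> \<ge> 0"
  shows "(\<integral>\<beta>. prod_normal_density m s \<beta> * \<bar>\<pi> \<beta> - \<pi>0\<bar> \<partial>lborel) \<le> \<omega> + 2 * B * (CARD('p) * (V / t\<^sup>2))"
proof -
  let ?g = "prod_normal_density m s"
  let ?tail = "\<lambda>k \<beta>. ?g \<beta> * indicator {\<beta>::real^'p. t \<le> \<bar>\<beta> $ k - m $ k\<bar>} \<beta>"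
  have gi: "integrable lborel ?g" by (rule integrable_prod_normal_density) (rule s)
  have g1: "(\<integral>\<beta>. ?g \<beta> \<partial>lborel) = 1" by (rule integral_prod_normal_density) (rule s)
  have ti: "integrable lborel (?tail k)" for k
    by (rule integral_prod_normal_density_tail_le(1)) (use s t in auto)
  have pt: "?g \<beta> * \<bar>\<pi> \<beta> - \<pi>0\<bar> \<le> \<omega> * ?g \<beta> + 2 * B * (\<Sum>k\<in>UNIV. ?tail k \<beta>)" for \<beta>
  proof -
    have "\<bar>\<pi> \<beta> - \<pi>0\<bar> \<le> \<omega> + 2 * B * (\<Sum>k\<in>UNIV. indicator {\<beta>. t \<le> \<bar>\<beta> $ k - m $ k\<bar>} \<beta>)"
      by (rule abs_diff_le_box_tails[OF pB p0B _ \<open>\<omega> \<ge> 0\<close>]) (rule near)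
    then have "?g \<beta> * \<bar>\<pi> \<beta> - \<pi>0\<bar>
        \<le> ?g \<beta> * (\<omega> + 2 * B * (\<Sum>k\<in>UNIV. indicator {\<beta>. t \<le> \<bar>\<beta> $ k - m $ k\<bar>} \<beta>))"
      by (rule mult_left_mono) (rule prod_normal_density_nonneg)
    also have "\<dots> = \<omega> * ?g \<beta> + 2 * B * (\<Sum>k\<in>UNIV. ?tail k \<beta>)"
      by (simp only: distrib_left sum_distrib_left mult_ac)
    finally show ?thesis .
  qed
  have "\<bar>\<bar>\<pi> \<beta> - \<pi>0\<bar>\<bar> \<le> B + \<bar>\<pi>0\<bar>" for \<beta> using pB[of \<beta>] by linarith
  from integrable_bounded_mult[OF gi _ this] have i: "integrable lborel (\<lambda>\<beta>. ?g \<beta> * \<bar>\<pi> \<beta> - \<pi>0\<bar>)"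
    by (simp add: mult.commute)
  have "(\<integral>\<beta>. ?g \<beta> * \<bar>\<pi> \<beta> - \<pi>0\<bar> \<partial>lborel) \<le> (\<integral>\<beta>. \<omega> * ?g \<beta> + 2 * B * (\<Sum>k\<in>UNIV. ?tail k \<beta>) \<partial>lborel)"
    by (rule integral_mono[OF i _ pt])
       (intro Bochner_Integration.integrable_add integrable_mult_right Bochner_Integration.integrable_sum ti gi)
  also have "\<dots> = \<omega> + 2 * B * (\<Sum>k\<in>UNIV. \<integral>\<beta>. ?tail k \<beta> \<partial>lborel)"
  proof -
    have "integrable lborel (\<lambda>\<beta>. 2 * B * (\<Sum>k\<in>UNIV. ?tail k \<beta>))"
      by (intro integrable_mult_right Bochner_Integration.integrable_sum ti)
    moreover have "(\<integral>\<beta>. (\<Sum>k\<in>UNIV. ?tail k \<beta>) \<partial>lborel) = (\<Sum>k\<in>UNIV. \<integral>\<beta>. ?tail k \<beta> \<partial>lborel)"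
      by (rule Bochner_Integration.integral_sum) (rule ti)
    ultimately show ?thesis
      using gi g1 by (simp only: Bochner_Integration.integral_add integrable_mult_right
          integral_mult_right_zero mult_1_right)
  qed
  also have "\<dots> \<le> \<omega> + 2 * B * (\<Sum>k\<in>(UNIV::'p set). V / t\<^sup>2)"
  proof -
    have "(\<integral>\<beta>. ?tail k \<beta> \<partial>lborel) \<le> (s k)\<^sup>2 / t\<^sup>2" for k
      by (rule integral_prod_normal_density_tail_le(2)) (use s t in auto)
    also have "(s k)\<^sup>2 / t\<^sup>2 \<le> V / t\<^sup>2" for k using sV[of k] by (simp add: divide_right_mono)
    finally show ?thesis using p0B by (intro add_left_mono mult_left_mono sum_mono) auto
  qed
  finally show ?thesis by simp
qed

section \<open>Diagonal matrices\<close>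

definition diag_mat :: "('n::finite \<Rightarrow> real) \<Rightarrow> real^'n^'n" where
  "diag_mat d = (\<chi> a b. if a = b then d a else 0)"

lemma diag_mat_mult: "diag_mat d ** diag_mat e = diag_mat (\<lambda>k. d k * e k)"
  unfolding diag_mat_def matrix_matrix_mult_def
  by (simp add: vec_eq_iff if_distrib[of "\<lambda>x. x * _"] sum.delta cong: if_cong)

lemma diag_mat_one: "diag_mat (\<lambda>_. 1) = mat 1"
  by (simp add: diag_mat_def mat_def)

lemma diag_mat_mult_vec: "diag_mat d *v v = (\<chi> i. d i * v $ i)"
  unfolding diag_mat_def matrix_vector_mult_def
  by (simp add: vec_eq_iff if_distrib[of "\<lambda>x. x * _"] cong: if_cong)

lemma det_diag_mat: "det (diag_mat d) = (\<Prod>k\<in>UNIV. d k)"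
  by (subst det_diagonal) (auto simp: diag_mat_def)

lemma scaleR_diag_mat: "c *\<^sub>R diag_mat d = diag_mat (\<lambda>k. c * d k)"
  by (simp add: diag_mat_def vec_eq_iff)

lemma matrix_inv_unique:
  fixes A B :: "real^'n::finite^'n"
  assumes "A ** B = mat 1" "B ** A = mat 1"
  shows "matrix_inv A = B"
proof -
  have inv: "A ** matrix_inv A = mat 1 \<and> matrix_inv A ** A = mat 1"
    unfolding matrix_inv_def by (rule someI[of _ B]) (use assms in blast)
  have "matrix_inv A = matrix_inv A ** (A ** B)" using assms by simp
  also have "\<dots> = (matrix_inv A ** A) ** B" by (simp add: matrix_mul_assoc)
  also have "\<dots> = B" using inv by simp
  finally show ?thesis .
qed

lemma matrix_inv_diag_mat:
  assumes "\<And>k. d k \<noteq> 0"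
  shows "matrix_inv (diag_mat d) = diag_mat (\<lambda>k. 1 / d k)"
  by (rule matrix_inv_unique) (simp_all add: diag_mat_mult assms diag_mat_one[symmetric])

lemma lambda_min_diag_mat_le: "lambda_min (diag_mat d) \<le> d k"
proof -
  let ?E = "{l. \<exists>v. v \<noteq> 0 \<and> diag_mat d *v v = l *\<^sub>R v}"
  have "?E \<subseteq> range d"
  proof
    fix l assume "l \<in> ?E"
    then obtain v where v: "v \<noteq> 0" "diag_mat d *v v = l *\<^sub>R v" by auto
    from v(1) obtain i where i: "v $ i \<noteq> 0" by (auto simp: vec_eq_iff)
    have "d i * v $ i = l * v $ i" using arg_cong[OF v(2), of "\<lambda>w. w $ i"] by (simp add: diag_mat_mult_vec)
    then have "l = d i" using i by simp
    then show "l \<in> range d" by simp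
  qed
  then have "finite ?E" by (rule finite_subset) simp
  moreover have "d k \<in> ?E"
    by (intro CollectI exI[of _ "axis k 1"]) (auto simp: diag_mat_mult_vec vec_eq_iff axis_def)
  ultimately show ?thesis unfolding lambda_min_def by (rule Min_le)
qed

lemma mvn_density_diag_mat:
  fixes m :: "real^'n::finite"
  assumes s: "\<And>k. s k > 0"
  shows "mvn_density m (diag_mat (\<lambda>k. (s k)\<^sup>2)) \<beta> = prod_normal_density m s \<beta>"
proof -
  have Sigma_inv: "matrix_inv (diag_mat (\<lambda>k. (s k)\<^sup>2)) = diag_mat (\<lambda>k. 1 / (s k)\<^sup>2)"
    using s by (intro matrix_inv_diag_mat) (metis less_irrefl zero_less_power)
  have quad: "(\<beta> - m) \<bullet> (diag_mat (\<lambda>k. 1 / (s k)\<^sup>2) *v (\<beta> - m)) = (\<Sum>k\<in>UNIV. (\<beta> $ k - m $ k)\<^sup>2 / (s k)\<^sup>2)"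
    by (simp add: diag_mat_mult_vec inner_vec_def power2_eq_square)
  have "1 / sqrt (2 * pi * (s k)\<^sup>2) = (2 * pi) powr (-1/2) * ((s k)\<^sup>2) powr (-1/2)" for k
  proof -
    have "1 / sqrt (2 * pi * (s k)\<^sup>2) = (2 * pi * (s k)\<^sup>2) powr (-1/2)"
      using s[of k] by (simp add: powr_minus powr_half_sqrt inverse_eq_divide)
    also have "\<dots> = (2 * pi) powr (-1/2) * ((s k)\<^sup>2) powr (-1/2)"
      by (simp add: powr_mult)
    finally show ?thesis .
  qed
  then have "(\<Prod>k\<in>(UNIV::'n set). 1 / sqrt (2 * pi * (s k)\<^sup>2))
      = ((2 * pi) powr (-1/2)) ^ CARD('n) * (\<Prod>k\<in>UNIV. ((s k)\<^sup>2) powr (-1/2))"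
    by (simp add: prod.distrib)
  also have "((2 * pi) powr (-1/2)) ^ CARD('n) = (2 * pi) powr (- real CARD('n) / 2)"
    by (subst powr_power) auto
  also have "(\<Prod>k\<in>UNIV. ((s k)\<^sup>2) powr (-1/2)) = (\<Prod>k\<in>UNIV. (s k)\<^sup>2) powr (-1/2)"
    by (rule prod_powr_distrib[symmetric])
  finally have const: "(\<Prod>k\<in>(UNIV::'n set). 1 / sqrt (2 * pi * (s k)\<^sup>2))
      = (2 * pi) powr (- real CARD('n) / 2) * (\<Prod>k\<in>UNIV. (s k)\<^sup>2) powr (-1/2)" .
  show ?thesis
    unfolding mvn_density_def Sigma_inv quad det_diag_mat prod_normal_density_eq const
    by simp
qed

section \<open>Unit-vector designs\<close>

lemma Basis_cartE:
  assumes "x \<in> (Basis :: (real^'n::finite) set)"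
  obtains i where "\<And>k. x $ k = (if k = i then 1 else 0)" and "\<And>v. x \<bullet> v = v $ i"
proof -
  obtain i where x: "x = axis i 1" using axis_inverse[OF assms] by blast
  show thesis
  proof (rule that)
    show "x $ k = (if k = i then 1 else 0)" for k by (simp add: x axis_def)
    show "x \<bullet> v = v $ i" for v by (simp add: x inner_axis')
  qed
qed

lemma Basis_cart_component_mult:
  "x \<in> (Basis :: (real^'n::finite) set) \<Longrightarrow> x $ a * x $ b = (if a = b then (x $ a)\<^sup>2 else 0)"
  by (elim Basis_cartE) simp

lemma Basis_cart_component_inner:
  "x \<in> (Basis :: (real^'n::finite) set) \<Longrightarrow> x $ k * (x \<bullet> v) = (x $ k)\<^sup>2 * v $ k"
  by (elim Basis_cartE) simp

lemma Basis_cart_inner_square: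
  assumes "x \<in> (Basis :: (real^'n::finite) set)"
  shows "(x \<bullet> v)\<^sup>2 = (\<Sum>k\<in>UNIV. (x $ k)\<^sup>2 * (v $ k)\<^sup>2)"
  using assms
proof (elim Basis_cartE)
  fix i assume x: "\<And>k. x $ k = (if k = i then 1 else 0)" and "\<And>v. x \<bullet> v = v $ i"
  then have "(x \<bullet> v)\<^sup>2 = (\<Sum>k\<in>UNIV. if k = i then (v $ k)\<^sup>2 else 0)" by simp
  also have "\<dots> = (\<Sum>k\<in>UNIV. (x $ k)\<^sup>2 * (v $ k)\<^sup>2)" by (rule sum.cong) (simp_all add: x)
  finally show ?thesis .
qed

lemma XtX_unit_design:
  assumes "\<forall>j<n. fst (h j) \<in> Basis"
  shows "XtX n h = diag_mat (column_sqnorm n h)"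
  using assms by (simp add: XtX_def diag_mat_def column_sqnorm_def vec_eq_iff Basis_cart_component_mult)

lemma Xty_unit_design:
  assumes "\<forall>j<n. fst (h j) \<in> Basis"
  shows "Xty n h $ k = noise_score \<beta>0 n h k + column_sqnorm n h k * \<beta>0 $ k"
proof -
  have "Xty n h $ k = (\<Sum>j<n. fst (h j) $ k * (snd (h j) - fst (h j) \<bullet> \<beta>0) + fst (h j) $ k * (fst (h j) \<bullet> \<beta>0))"
    unfolding Xty_def by (simp add: algebra_simps)
  also have "\<dots> = noise_score \<beta>0 n h k + (\<Sum>j<n. (fst (h j) $ k)\<^sup>2 * \<beta>0 $ k)"
    unfolding noise_score_def using assms by (simp add: sum.distrib Basis_cart_component_inner)
  also have "\<dots> = noise_score \<beta>0 n h k + column_sqnorm n h k * \<beta>0 $ k"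
    unfolding column_sqnorm_def by (simp add: sum_distrib_right)
  finally show ?thesis .
qed

lemma beta_hat_unit_design:
  assumes "\<forall>j<n. fst (h j) \<in> Basis" and N: "\<And>k. column_sqnorm n h k > 0"
  shows "beta_hat n h = (\<chi> k. Xty n h $ k / column_sqnorm n h k)"
proof -
  have inv: "matrix_inv (XtX n h) = diag_mat (\<lambda>k. 1 / column_sqnorm n h k)"
    unfolding XtX_unit_design[OF assms(1)] using N by (intro matrix_inv_diag_mat) (metis less_irrefl)
  show ?thesis unfolding beta_hat_def inv diag_mat_mult_vec by (simp add: vec_eq_iff)
qed

lemma beta_hat_error_unit_design:
  assumes "\<forall>j<n. fst (h j) \<in> Basis" and N: "\<And>k. column_sqnorm n h k > 0"
  shows "beta_hat n h $ k - \<beta>0 $ k = noise_score \<beta>0 n h k / column_sqnorm n h k"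
  using N[of k] by (simp add: beta_hat_unit_design[OF assms] Xty_unit_design[OF assms(1), of k \<beta>0] field_simps)

lemma sum_sq_residuals_unit_design:
  assumes design: "\<forall>j<n. fst (h j) \<in> Basis" and N: "\<And>k. column_sqnorm n h k > 0"
  defines "m \<equiv> beta_hat n h"
  shows "(\<Sum>j<n. (snd (h j) - fst (h j) \<bullet> \<beta>)\<^sup>2)
       = ((\<Sum>j<n. (snd (h j))\<^sup>2) - (\<Sum>k\<in>UNIV. column_sqnorm n h k * (m $ k)\<^sup>2))
         + (\<Sum>k\<in>UNIV. column_sqnorm n h k * (\<beta> $ k - m $ k)\<^sup>2)"
proof -
  let ?N = "column_sqnorm n h"
  have N0: "?N k \<noteq> 0" for k using N[of k] by simp
  have "(\<Sum>j<n. snd (h j) * (fst (h j) \<bullet> \<beta>)) = (\<Sum>j<n. \<Sum>k\<in>UNIV. \<beta> $ k * (fst (h j) $ k * snd (h j)))"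
    by (simp add: inner_vec_def sum_distrib_left mult_ac)
  also have "\<dots> = (\<Sum>k\<in>UNIV. \<Sum>j<n. \<beta> $ k * (fst (h j) $ k * snd (h j)))"
    by (rule sum.swap)
  also have "\<dots> = (\<Sum>k\<in>UNIV. \<beta> $ k * (?N k * m $ k))"
    by (simp add: Xty_def sum_distrib_left[symmetric] m_def beta_hat_unit_design[OF design N] N0)
  finally have cross: "(\<Sum>j<n. snd (h j) * (fst (h j) \<bullet> \<beta>)) = (\<Sum>k\<in>UNIV. \<beta> $ k * (?N k * m $ k))" .
  have "(\<Sum>j<n. (fst (h j) \<bullet> \<beta>)\<^sup>2) = (\<Sum>j<n. \<Sum>k\<in>UNIV. (fst (h j) $ k)\<^sup>2 * (\<beta> $ k)\<^sup>2)"
    using design by (simp add: Basis_cart_inner_square)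
  also have "\<dots> = (\<Sum>k\<in>UNIV. \<Sum>j<n. (fst (h j) $ k)\<^sup>2 * (\<beta> $ k)\<^sup>2)"
    by (rule sum.swap)
  also have "\<dots> = (\<Sum>k\<in>UNIV. ?N k * (\<beta> $ k)\<^sup>2)"
    by (simp add: column_sqnorm_def sum_distrib_right)
  finally have square: "(\<Sum>j<n. (fst (h j) \<bullet> \<beta>)\<^sup>2) = (\<Sum>k\<in>UNIV. ?N k * (\<beta> $ k)\<^sup>2)" .
  have complete_square: "- 2 * (\<beta> $ k * (?N k * m $ k)) + ?N k * (\<beta> $ k)\<^sup>2
      = ?N k * (\<beta> $ k - m $ k)\<^sup>2 - ?N k * (m $ k)\<^sup>2" for k
    by (simp add: power2_eq_square algebra_simps)
  have "(\<Sum>j<n. (snd (h j) - fst (h j) \<bullet> \<beta>)\<^sup>2)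
      = (\<Sum>j<n. (snd (h j))\<^sup>2) + (- 2 * (\<Sum>j<n. snd (h j) * (fst (h j) \<bullet> \<beta>)) + (\<Sum>j<n. (fst (h j) \<bullet> \<beta>)\<^sup>2))"
    by (simp add: power2_diff sum.distrib sum_subtractf sum_distrib_left mult.assoc sum_negf)
  also have "- 2 * (\<Sum>j<n. snd (h j) * (fst (h j) \<bullet> \<beta>)) + (\<Sum>j<n. (fst (h j) \<bullet> \<beta>)\<^sup>2)
      = (\<Sum>k\<in>UNIV. - 2 * (\<beta> $ k * (?N k * m $ k))) + (\<Sum>k\<in>UNIV. ?N k * (\<beta> $ k)\<^sup>2)"
    unfolding cross square sum_distrib_left ..
  also have "\<dots> = (\<Sum>k\<in>UNIV. - 2 * (\<beta> $ k * (?N k * m $ k)) + ?N k * (\<beta> $ k)\<^sup>2)"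
    by (rule sum.distrib[symmetric])
  also have "\<dots> = (\<Sum>k\<in>UNIV. ?N k * (\<beta> $ k - m $ k)\<^sup>2) - (\<Sum>k\<in>UNIV. ?N k * (m $ k)\<^sup>2)"
    unfolding complete_square by (rule sum_subtractf)
  finally show ?thesis by simp
qed

definition ols_sd :: "real \<Rightarrow> nat \<Rightarrow> 'p::finite hist \<Rightarrow> 'p \<Rightarrow> real" where
  "ols_sd \<sigma>2 n h k = sqrt (\<sigma>2 / column_sqnorm n h k)"

lemma ols_sd_pos: "\<sigma>2 > 0 \<Longrightarrow> column_sqnorm n h k > 0 \<Longrightarrow> ols_sd \<sigma>2 n h k > 0"
  by (simp add: ols_sd_def)

lemma ols_sd_square: "\<sigma>2 > 0 \<Longrightarrow> column_sqnorm n h k > 0 \<Longrightarrow> (ols_sd \<sigma>2 n h k)\<^sup>2 = \<sigma>2 / column_sqnorm n h k"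
  by (simp add: ols_sd_def)

lemma likelihood_unit_design:
  fixes h :: "'p::finite hist"
  assumes design: "\<forall>j<n. fst (h j) \<in> Basis" and s2: "\<sigma>2 > 0" and N: "\<And>k. column_sqnorm n h k > 0"
  shows "\<exists>\<kappa>>0. \<forall>\<beta>. likelihood \<sigma>2 n h \<beta> = \<kappa> * prod_normal_density (beta_hat n h) (ols_sd \<sigma>2 n h) \<beta>"
proof -
  let ?m = "beta_hat n h" and ?s = "ols_sd \<sigma>2 n h"
  define C where "C = (\<Sum>j<n. (snd (h j))\<^sup>2) - (\<Sum>k\<in>UNIV. column_sqnorm n h k * (?m $ k)\<^sup>2)"
  define Z where "Z = (\<Prod>k\<in>(UNIV::'p set). 1 / sqrt (2 * pi * (?s k)\<^sup>2))"
  have "1 / sqrt (2 * pi * (?s k)\<^sup>2) > 0" for k using ols_sd_pos[OF s2 N, of k] by simp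
  then have Z: "Z > 0" unfolding Z_def by (intro prod_pos) auto
  have "likelihood \<sigma>2 n h \<beta> = exp (- C / (2 * \<sigma>2)) / Z * prod_normal_density ?m ?s \<beta>" for \<beta>
  proof -
    have "(\<beta> $ k - ?m $ k)\<^sup>2 / (?s k)\<^sup>2 = column_sqnorm n h k * (\<beta> $ k - ?m $ k)\<^sup>2 / \<sigma>2" for k
      using N[of k] s2 by (simp add: ols_sd_square)
    then have "prod_normal_density ?m ?s \<beta>
        = Z * exp (- (\<Sum>k\<in>UNIV. column_sqnorm n h k * (\<beta> $ k - ?m $ k)\<^sup>2) / (2 * \<sigma>2))"
      by (simp add: prod_normal_density_eq Z_def sum_divide_distrib[symmetric])
    moreover have "likelihood \<sigma>2 n h \<beta> = exp (- (\<Sum>j<n. (snd (h j) - fst (h j) \<bullet> \<beta>)\<^sup>2) / (2 * \<sigma>2))"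
      by (simp add: likelihood_def exp_sum[symmetric] sum_divide_distrib[symmetric] sum_negf)
    ultimately show ?thesis
      using Z unfolding sum_sq_residuals_unit_design[OF design N] C_def[symmetric]
      by (simp add: add_divide_distrib exp_add[symmetric] diff_divide_distrib)
  qed
  moreover have "exp (- C / (2 * \<sigma>2)) / Z > 0" using Z by simp
  ultimately show ?thesis by blast
qed

lemma mvn_density_unit_design:
  fixes h :: "'p::finite hist"
  assumes design: "\<forall>j<n. fst (h j) \<in> Basis" and s2: "\<sigma>2 > 0" and N: "\<And>k. column_sqnorm n h k > 0"
  shows "mvn_density (beta_hat n h) (\<sigma>2 *\<^sub>R matrix_inv (XtX n h)) \<beta>
       = prod_normal_density (beta_hat n h) (ols_sd \<sigma>2 n h) \<beta>"
proof -
  have "column_sqnorm n h k \<noteq> 0" for k using N[of k] by simp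
  then have "\<sigma>2 *\<^sub>R matrix_inv (XtX n h) = diag_mat (\<lambda>k. (ols_sd \<sigma>2 n h k)\<^sup>2)"
    using N s2 unfolding XtX_unit_design[OF design]
    by (subst matrix_inv_diag_mat) (auto simp: scaleR_diag_mat ols_sd_square intro!: arg_cong[of _ _ diag_mat])
  then show ?thesis
    using mvn_density_diag_mat[OF ols_sd_pos[OF s2 N]] by simp
qed

lemma posterior_unit_design:
  fixes h :: "'p::finite hist"
  assumes design: "\<forall>j<n. fst (h j) \<in> Basis" and s2: "\<sigma>2 > 0" and N: "\<And>k. column_sqnorm n h k > 0"
  defines "g \<equiv> prod_normal_density (beta_hat n h) (ols_sd \<sigma>2 n h)"
  shows "posterior \<pi> \<sigma>2 n h = density lborel (\<lambda>\<beta>. \<pi> \<beta> * g \<beta> / (\<integral>b. \<pi> b * g b \<partial>lborel))"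
proof -
  obtain \<kappa> where "\<kappa> > 0" and L: "\<And>\<beta>. likelihood \<sigma>2 n h \<beta> = \<kappa> * g \<beta>"
    using likelihood_unit_design[OF design s2 N] unfolding g_def by blast
  have "(\<integral>b. \<pi> b * likelihood \<sigma>2 n h b \<partial>lborel) = \<kappa> * (\<integral>b. \<pi> b * g b \<partial>lborel)"
    unfolding L by (simp add: mult.left_commute)
  then show ?thesis
    using \<open>\<kappa> > 0\<close> by (simp add: posterior_def L)
qed

lemma tv_posterior_mvn_le:
  fixes h :: "'p::finite hist" and \<pi> :: "real^'p \<Rightarrow> real"
  assumes s2: "\<sigma>2 > 0" and p_nonneg: "\<And>b. \<pi> b \<ge> 0" and pm: "\<pi> \<in> borel_measurable borel"
    and pB: "\<And>\<beta>. \<bar>\<pi> \<beta>\<bar> \<le> B" and p0: "\<pi> \<beta>0 > 0"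
    and design: "\<forall>j<n. fst (h j) \<in> Basis" and N: "\<And>k. column_sqnorm n h k > 0"
    and near: "\<And>\<beta>. (\<forall>k. \<bar>\<beta> $ k - beta_hat n h $ k\<bar> < t) \<Longrightarrow> \<bar>\<pi> \<beta> - \<pi> \<beta>0\<bar> \<le> \<omega>"
    and "\<omega> \<ge> 0" and "t > 0" and V: "\<And>k. \<sigma>2 / column_sqnorm n h k \<le> V"
    and D: "\<omega> + 2 * B * (CARD('p) * (V / t\<^sup>2)) \<le> \<pi> \<beta>0 / 2"
  shows "tv_dist (posterior \<pi> \<sigma>2 n h) (mvn (beta_hat n h) (\<sigma>2 *\<^sub>R matrix_inv (XtX n h)))
           \<le> 4 * (\<omega> + 2 * B * (CARD('p) * (V / t\<^sup>2))) / \<pi> \<beta>0"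
proof -
  let ?g = "prod_normal_density (beta_hat n h) (ols_sd \<sigma>2 n h)"
  let ?Z = "\<integral>b. \<pi> b * ?g b \<partial>lborel"
  have s: "\<And>k. ols_sd \<sigma>2 n h k > 0" using ols_sd_pos[OF s2 N] .
  have gi: "integrable lborel ?g" by (rule integrable_prod_normal_density) (rule s)
  have g1: "(\<integral>\<beta>. ?g \<beta> \<partial>lborel) = 1" by (rule integral_prod_normal_density) (rule s)
  have "(\<integral>\<beta>. ?g \<beta> * \<bar>\<pi> \<beta> - \<pi> \<beta>0\<bar> \<partial>lborel) \<le> \<omega> + 2 * B * (CARD('p) * (V / t\<^sup>2))"
    using V by (intro integral_prod_normal_density_abs_diff_le[OF s _ \<open>t > 0\<close> pm pB pB near \<open>\<omega> \<ge> 0\<close>])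
      (simp add: ols_sd_square[OF s2 N])
  note reweighting = L1_dist_prior_reweighting_le[OF prod_normal_density_nonneg gi g1 pm pB p0 this D]
  have "integrable lborel (\<lambda>\<beta>. \<pi> \<beta> * ?g \<beta>)"
    by (rule integrable_bounded_mult[OF gi _ pB]) (simp add: pm)
  then have "integrable lborel (\<lambda>\<beta>. \<pi> \<beta> * ?g \<beta> / ?Z)" by simp
  moreover have "0 \<le> \<pi> \<beta> * ?g \<beta> / ?Z" for \<beta>
    using reweighting(1) p0 by (intro divide_nonneg_pos mult_nonneg_nonneg p_nonneg prod_normal_density_nonneg) auto
  ultimately have "tv_dist (posterior \<pi> \<sigma>2 n h) (mvn (beta_hat n h) (\<sigma>2 *\<^sub>R matrix_inv (XtX n h)))
      \<le> (\<integral>\<beta>. \<bar>\<pi> \<beta> * ?g \<beta> / ?Z - ?g \<beta>\<bar> \<partial>lborel)"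
    unfolding posterior_unit_design[OF design s2 N] mvn_def mvn_density_unit_design[OF design s2 N]
    by (intro tv_dist_density_le_L1 gi prod_normal_density_nonneg)
  also have "\<dots> \<le> 4 * (\<omega> + 2 * B * (CARD('p) * (V / t\<^sup>2))) / \<pi> \<beta>0"
    using reweighting(2) by simp
  finally show ?thesis .
qed

text \<open>The estimate is then within \<open>t\<close> of \<open>\<beta>0\<close>, so the box of half-width \<open>t\<close> around it lies in
  the box of half-width \<open>2 t\<close> around \<open>\<beta>0\<close> on which the prior is controlled.\<close>
lemma tv_posterior_mvn_le_if_noise_score_small:
  fixes h :: "'p::finite hist" and \<pi> :: "real^'p \<Rightarrow> real"
  assumes s2: "\<sigma>2 > 0" and p_nonneg: "\<And>b. \<pi> b \<ge> 0" and pm: "\<pi> \<in> borel_measurable borel"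
    and pB: "\<And>\<beta>. \<bar>\<pi> \<beta>\<bar> \<le> B" and p0: "\<pi> \<beta>0 > 0"
    and design: "\<forall>j<n. fst (h j) \<in> Basis" and "R > 0" and N: "\<And>k. column_sqnorm n h k > R"
    and S: "\<And>k. \<bar>noise_score \<beta>0 n h k\<bar> < t * column_sqnorm n h k"
    and near: "\<And>\<beta>. (\<forall>k. \<bar>\<beta> $ k - \<beta>0 $ k\<bar> < 2 * t) \<Longrightarrow> \<bar>\<pi> \<beta> - \<pi> \<beta>0\<bar> \<le> \<omega>"
    and "\<omega> \<ge> 0" and "t > 0"
    and D: "\<omega> + 2 * B * (CARD('p) * (\<sigma>2 / R / t\<^sup>2)) \<le> \<pi> \<beta>0 / 2"
  shows "tv_dist (posterior \<pi> \<sigma>2 n h) (mvn (beta_hat n h) (\<sigma>2 *\<^sub>R matrix_inv (XtX n h)))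
           \<le> 4 * (\<omega> + 2 * B * (CARD('p) * (\<sigma>2 / R / t\<^sup>2))) / \<pi> \<beta>0"
proof (rule tv_posterior_mvn_le[OF s2 p_nonneg pm pB p0 design _ _ \<open>\<omega> \<ge> 0\<close> \<open>t > 0\<close> _ D])
  have N0: "column_sqnorm n h k > 0" for k using N[of k] \<open>R > 0\<close> by linarith
  then show "column_sqnorm n h k > 0" for k .
  have close: "\<bar>beta_hat n h $ k - \<beta>0 $ k\<bar> < t" for k
    using S[of k] N0[of k] by (simp add: beta_hat_error_unit_design[OF design N0] abs_divide divide_less_eq)
  show "\<bar>\<pi> \<beta> - \<pi> \<beta>0\<bar> \<le> \<omega>" if "\<forall>k. \<bar>\<beta> $ k - beta_hat n h $ k\<bar> < t" for \<beta>
  proof (intro near allI)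
    fix k
    have "\<bar>\<beta> $ k - beta_hat n h $ k\<bar> < t" using that by blast
    with close[of k] show "\<bar>\<beta> $ k - \<beta>0 $ k\<bar> < 2 * t" by linarith
  qed
  show "\<sigma>2 / column_sqnorm n h k \<le> \<sigma>2 / R" for k
    using N[of k] \<open>R > 0\<close> s2 by (intro divide_left_mono) auto
qed

section \<open>Uniform bounds over sampling rules\<close>

lemma emeasure_noise_score_large_le:
  fixes \<Lambda> :: "nat \<Rightarrow> 'p::finite hist \<Rightarrow> (real^'p) measure" and \<beta>0 :: "real^'p" and n :: nat
  assumes V: "valid_rule \<Lambda>" and s2: "\<sigma>2 > 0" and "t > 0" and "r \<ge> 0"
  defines "P \<equiv> traj \<Lambda> \<beta>0 \<sigma>2 n"
  shows "{h \<in> space P. \<exists>k. column_sqnorm n h k > r \<and> \<bar>noise_score \<beta>0 n h k\<bar> \<ge> t * column_sqnorm n h k} \<in> sets P"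
    and "emeasure P {h \<in> space P. \<exists>k. column_sqnorm n h k > r \<and> \<bar>noise_score \<beta>0 n h k\<bar> \<ge> t * column_sqnorm n h k}
           \<le> ennreal (2 * CARD('p) * exp (- (r * t\<^sup>2 / (2 * \<sigma>2))))"
proof -
  let ?A = "\<lambda>(k, s::real). {h \<in> space P. column_sqnorm n h k > r \<and> s * noise_score \<beta>0 n h k \<ge> t * column_sqnorm n h k}"
  let ?I = "(UNIV :: 'p set) \<times> {1, -1 :: real}"
  have A: "?A i \<in> sets P" for i
    unfolding P_def split_beta by (rule sets_traj_noise_score_ge[OF V s2])
  have eq: "{h \<in> space P. \<exists>k. column_sqnorm n h k > r \<and> \<bar>noise_score \<beta>0 n h k\<bar> \<ge> t * column_sqnorm n h k}
      = (\<Union>i\<in>?I. ?A i)"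
    by (auto simp: abs_if split: if_splits)
  show "{h \<in> space P. \<exists>k. column_sqnorm n h k > r \<and> \<bar>noise_score \<beta>0 n h k\<bar> \<ge> t * column_sqnorm n h k} \<in> sets P"
    unfolding eq using A by blast
  have "emeasure P (\<Union>i\<in>?I. ?A i) \<le> (\<Sum>i\<in>?I. emeasure P (?A i))"
    using A by (intro emeasure_subadditive_finite) auto
  also have "\<dots> \<le> (\<Sum>i\<in>?I. ennreal (exp (- (r * t\<^sup>2 / (2 * \<sigma>2)))))"
    unfolding P_def
    using emeasure_noise_score_ge_le[OF V s2 \<open>t > 0\<close> \<open>r \<ge> 0\<close>, where s = 1]
      emeasure_noise_score_ge_le[OF V s2 \<open>t > 0\<close> \<open>r \<ge> 0\<close>, where s = "-1"]
    by (intro sum_mono) auto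
  also have "\<dots> = ennreal (2 * CARD('p) * exp (- (r * t\<^sup>2 / (2 * \<sigma>2))))"
    by (simp add: card_cartesian_product ennreal_mult' ennreal_of_nat_eq_real_of_nat)
  finally show "emeasure P {h \<in> space P. \<exists>k. column_sqnorm n h k > r \<and> \<bar>noise_score \<beta>0 n h k\<bar> \<ge> t * column_sqnorm n h k}
      \<le> ennreal (2 * CARD('p) * exp (- (r * t\<^sup>2 / (2 * \<sigma>2))))"
    unfolding eq .
qed

text \<open>No measurability of \<open>G\<close> is needed: if \<open>G\<close> is not an event, \<open>prob G = 0\<close> and \<open>\<epsilon> > 1\<close>.\<close>
lemma (in prob_space) emeasure_le_if_subset_compl_Un:
  assumes T: "T \<subseteq> (space M - G) \<union> X" and X: "X \<in> events" "emeasure M X \<le> b"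
    and G: "prob G > 1 - \<epsilon>"
  shows "emeasure M T \<le> ennreal \<epsilon> + b"
proof (cases "G \<in> events")
  case True
  have "emeasure M T \<le> emeasure M ((space M - G) \<union> X)"
    using T X True by (intro emeasure_mono) auto
  also have "\<dots> \<le> emeasure M (space M - G) + emeasure M X"
    using X True by (intro emeasure_subadditive) auto
  also have "\<dots> \<le> ennreal \<epsilon> + b"
  proof (rule add_mono)
    show "emeasure M (space M - G) \<le> ennreal \<epsilon>"
      using G True by (simp add: emeasure_eq_measure prob_compl ennreal_leI)
  qed (rule X(2))
  finally show ?thesis .
next
  case False
  then have "1 \<le> ennreal \<epsilon>" using G by (simp add: measure_notin_sets)
  have "emeasure M T \<le> 1" by (rule emeasure_le_1)
  also have "\<dots> \<le> ennreal \<epsilon>" by fact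
  also have "\<dots> \<le> ennreal \<epsilon> + b" by simp
  finally show ?thesis .
qed

lemma emeasure_tv_posterior_mvn_gt_le:
  fixes \<Lambda> :: "nat \<Rightarrow> 'p::finite hist \<Rightarrow> (real^'p) measure" and \<pi> :: "real^'p \<Rightarrow> real"
  assumes s2: "\<sigma>2 > 0" and p_nonneg: "\<And>b. \<pi> b \<ge> 0" and pm: "\<pi> \<in> borel_measurable borel"
    and pB: "\<And>\<beta>. \<bar>\<pi> \<beta>\<bar> \<le> B" and p0: "\<pi> \<beta>0 > 0"
    and V: "valid_rule \<Lambda>" and P: "P = traj \<Lambda> \<beta>0 \<sigma>2 n"
    and unit: "AE h in P. \<forall>j<n. fst (h j) \<in> range (\<lambda>k. axis k 1)"
    and G: "measure P {h \<in> space P. lambda_min (XtX n h) > r} > 1 - \<epsilon>"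
    and near: "\<And>\<beta>. (\<forall>k. \<bar>\<beta> $ k - \<beta>0 $ k\<bar> < 2 * t) \<Longrightarrow> \<bar>\<pi> \<beta> - \<pi> \<beta>0\<bar> \<le> \<omega>"
    and "t > 0" and "\<omega> \<ge> 0" and "R > 0" and "r \<ge> R"
    and D: "\<omega> + 2 * B * (CARD('p) * (\<sigma>2 / R / t\<^sup>2)) \<le> \<pi> \<beta>0 / 2"
    and Dc: "4 * (\<omega> + 2 * B * (CARD('p) * (\<sigma>2 / R / t\<^sup>2))) / \<pi> \<beta>0 \<le> c"
  shows "emeasure P {h \<in> space P. tv_dist (posterior \<pi> \<sigma>2 n h) (mvn (beta_hat n h) (\<sigma>2 *\<^sub>R matrix_inv (XtX n h))) > c}
         \<le> ennreal \<epsilon> + ennreal (2 * CARD('p) * exp (- (r * t\<^sup>2 / (2 * \<sigma>2))))"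
proof -
  interpret prob_space P unfolding P by (rule prob_space_traj[OF V s2])
  let ?Bad = "{h \<in> space P. \<exists>k. column_sqnorm n h k > r \<and> \<bar>noise_score \<beta>0 n h k\<bar> \<ge> t * column_sqnorm n h k}"
  have r: "r \<ge> 0" using \<open>R > 0\<close> \<open>r \<ge> R\<close> by linarith
  note Bad = emeasure_noise_score_large_le[OF V s2 \<open>t > 0\<close> r, of \<beta>0 n, folded P]
  from unit obtain N0 where N0: "{h \<in> space P. \<not> (\<forall>j<n. fst (h j) \<in> range (\<lambda>k. axis k 1))} \<subseteq> N0"
    "N0 \<in> events" "emeasure P N0 = 0" by (rule AE_E)
  show ?thesis
  proof (rule emeasure_le_if_subset_compl_Un[OF _ _ _ G])
    show "?Bad \<union> N0 \<in> events" using Bad(1) N0(2) by blast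
    show "emeasure P (?Bad \<union> N0) \<le> ennreal (2 * CARD('p) * exp (- (r * t\<^sup>2 / (2 * \<sigma>2))))"
      using emeasure_subadditive[OF Bad(1) N0(2)] Bad(2) N0(3) by simp
    show "{h \<in> space P. tv_dist (posterior \<pi> \<sigma>2 n h) (mvn (beta_hat n h) (\<sigma>2 *\<^sub>R matrix_inv (XtX n h))) > c}
      \<subseteq> (space P - {h \<in> space P. lambda_min (XtX n h) > r}) \<union> (?Bad \<union> N0)"
    proof (intro subsetI, rule ccontr)
      fix h assume h: "h \<in> {h \<in> space P. tv_dist (posterior \<pi> \<sigma>2 n h) (mvn (beta_hat n h) (\<sigma>2 *\<^sub>R matrix_inv (XtX n h))) > c}"
        and "h \<notin> (space P - {h \<in> space P. lambda_min (XtX n h) > r}) \<union> (?Bad \<union> N0)"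
      then have "lambda_min (XtX n h) > r" and "h \<notin> ?Bad" and "h \<notin> N0" by auto
      have design: "\<forall>j<n. fst (h j) \<in> Basis"
        using \<open>h \<notin> N0\<close> N0(1) h by (auto simp: Basis_vec_def)
      have Nr: "column_sqnorm n h k > r" for k
        using lambda_min_diag_mat_le[of "column_sqnorm n h" k] \<open>lambda_min (XtX n h) > r\<close>
        unfolding XtX_unit_design[OF design] by linarith
      have N: "column_sqnorm n h k > R" for k using Nr[of k] \<open>r \<ge> R\<close> by linarith
      have "\<bar>noise_score \<beta>0 n h k\<bar> < t * column_sqnorm n h k" for k
        using \<open>h \<notin> ?Bad\<close> h Nr[of k] by (auto simp: not_le)
      from tv_posterior_mvn_le_if_noise_score_small[OF s2 p_nonneg pm pB p0 design \<open>R > 0\<close> N this near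
          \<open>\<omega> \<ge> 0\<close> \<open>t > 0\<close> D]
      show False using h Dc by auto
    qed
  qed
qed

lemma prior_localization_constants:
  fixes \<pi> :: "real^'p::finite \<Rightarrow> real"
  assumes pc: "continuous_on UNIV \<pi>" and p0: "\<pi> \<beta>0 > 0" and "c > 0"
  obtains t \<omega> R where "t > 0" "\<omega> \<ge> 0" "R > 0"
    and "\<And>\<beta>. (\<forall>k. \<bar>\<beta> $ k - \<beta>0 $ k\<bar> < 2 * t) \<Longrightarrow> \<bar>\<pi> \<beta> - \<pi> \<beta>0\<bar> \<le> \<omega>"
    and "\<omega> + 2 * B * (CARD('p) * (\<sigma>2 / R / t\<^sup>2)) \<le> \<pi> \<beta>0 / 2"
    and "4 * (\<omega> + 2 * B * (CARD('p) * (\<sigma>2 / R / t\<^sup>2))) / \<pi> \<beta>0 \<le> c"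
proof -
  define \<omega> where "\<omega> = min (\<pi> \<beta>0 / 8) (c * \<pi> \<beta>0 / 16)"
  have \<omega>: "\<omega> > 0" unfolding \<omega>_def using p0 \<open>c > 0\<close> by simp
  obtain \<eta> where "\<eta> > 0" and \<eta>: "\<And>\<beta>. dist \<beta> \<beta>0 < \<eta> \<Longrightarrow> dist (\<pi> \<beta>) (\<pi> \<beta>0) < \<omega>"
    using pc \<omega> unfolding continuous_on_iff by (metis UNIV_I)
  define t where "t = \<eta> / (2 * CARD('p))"
  have t: "t > 0" unfolding t_def using \<open>\<eta> > 0\<close> by simp
  have near: "\<bar>\<pi> \<beta> - \<pi> \<beta>0\<bar> \<le> \<omega>" if "\<forall>k. \<bar>\<beta> $ k - \<beta>0 $ k\<bar> < 2 * t" for \<beta>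
  proof -
    have "dist \<beta> \<beta>0 \<le> (\<Sum>k\<in>UNIV. \<bar>(\<beta> - \<beta>0) $ k\<bar>)" unfolding dist_norm by (rule norm_le_l1_cart)
    also have "\<dots> < (\<Sum>k\<in>(UNIV::'p set). 2 * t)" using that by (intro sum_strict_mono) auto
    also have "\<dots> = \<eta>" unfolding t_def by simp
    finally show ?thesis using \<eta> by (simp add: dist_real_def less_imp_le)
  qed
  define R where "R = max 1 (2 * B * CARD('p) * \<sigma>2 / (t\<^sup>2 * \<omega>))"
  have "R > 0" unfolding R_def by simp
  have "2 * B * CARD('p) * \<sigma>2 / (t\<^sup>2 * \<omega>) \<le> R" unfolding R_def by simp
  then have "2 * B * CARD('p) * \<sigma>2 \<le> R * (t\<^sup>2 * \<omega>)"
    using t \<omega> by (simp add: divide_le_eq)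
  then have "2 * B * (CARD('p) * (\<sigma>2 / R / t\<^sup>2)) \<le> \<omega>"
    using \<open>R > 0\<close> t by (simp add: field_simps)
  moreover define D where "D = \<omega> + 2 * B * (CARD('p) * (\<sigma>2 / R / t\<^sup>2))"
  ultimately have "D \<le> \<pi> \<beta>0 / 4" and "D \<le> c * \<pi> \<beta>0 / 8"
    unfolding \<omega>_def by linarith+
  then have "D \<le> \<pi> \<beta>0 / 2" and "4 * D / \<pi> \<beta>0 \<le> c"
    using p0 mult_pos_pos[OF \<open>c > 0\<close> p0] by (simp_all add: pos_divide_le_eq)
  then show thesis
    using that[OF t less_imp_le[OF \<omega>] \<open>R > 0\<close> near] unfolding D_def by blast
qed

lemma tendsto_ennreal_exp_tail_bound:
  fixes r \<epsilon> :: "nat \<Rightarrow> real"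
  assumes "filterlim r at_top sequentially" "\<epsilon> \<longlonglongrightarrow> 0" "a > 0"
  shows "(\<lambda>n. ennreal (\<epsilon> n) + ennreal (C * exp (- (r n * a)))) \<longlonglongrightarrow> 0"
proof -
  have "filterlim (\<lambda>n. a * r n) at_top sequentially"
    by (rule filterlim_tendsto_pos_mult_at_top[OF tendsto_const assms(3,1)])
  then have "filterlim (\<lambda>n. - (r n * a)) at_bot sequentially"
    by (simp add: filterlim_uminus_at_top mult.commute)
  from filterlim_compose[OF exp_at_bot this]
  have "(\<lambda>n. C * exp (- (r n * a))) \<longlonglongrightarrow> 0" by (rule tendsto_mult_right_zero)
  from tendsto_add[OF tendsto_ennrealI[OF assms(2)] tendsto_ennrealI[OF this]] show ?thesis
    by simp
qed

lemma limsup_eq_0_if_eventually_le: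
  fixes f g :: "nat \<Rightarrow> ennreal"
  assumes "eventually (\<lambda>n. f n \<le> g n) sequentially" "g \<longlonglongrightarrow> 0"
  shows "limsup f = 0"
proof -
  have "limsup f \<le> limsup g" using assms(1) by (rule Limsup_mono)
  also have "limsup g = 0" using assms(2) by (simp add: lim_imp_Limsup)
  finally show ?thesis by simp
qed

theorem corollary1:
  fixes \<beta>0 :: "real^'p::finite" and \<sigma>2 :: real and \<pi> :: "real^'p \<Rightarrow> real"
    and r \<epsilon> :: "nat \<Rightarrow> real" and Pset :: "nat \<Rightarrow> 'p hist measure set" and c :: real
  assumes "\<sigma>2 > 0"
    and "\<forall>b. \<pi> b \<ge> 0" and "integrable lborel \<pi>" and "(\<integral>b. \<pi> b \<partial>lborel) = 1"
    and "continuous_on UNIV \<pi>" and "bounded (range \<pi>)" and "\<pi> \<beta>0 > 0"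
    and "filterlim r at_top sequentially" and "\<epsilon> \<longlonglongrightarrow> 0"
    and "\<And>n P. P \<in> Pset n \<Longrightarrow> \<exists>\<Lambda>. valid_rule \<Lambda> \<and> P = traj \<Lambda> \<beta>0 \<sigma>2 n"
    and "\<And>n P. P \<in> Pset n \<Longrightarrow>
           (AE h in P. \<forall>j<n. fst (h j) \<in> range (\<lambda>k. axis k 1))"
    and "\<And>n P. P \<in> Pset n \<Longrightarrow>
           measure P {h \<in> space P. lambda_min (XtX n h) > r n} > 1 - \<epsilon> n"
    and "c > 0"
  shows "limsup (\<lambda>n. SUP P \<in> Pset n.
           emeasure P {h \<in> space P.
             tv_dist (posterior \<pi> \<sigma>2 n h) (mvn (beta_hat n h) (\<sigma>2 *\<^sub>R matrix_inv (XtX n h))) > c})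
         = 0"
proof -
  let ?E = "\<lambda>n P. {h \<in> space P.
    tv_dist (posterior \<pi> \<sigma>2 n h) (mvn (beta_hat n h) (\<sigma>2 *\<^sub>R matrix_inv (XtX n h))) > c}"
  obtain B where pB: "\<And>\<beta>. \<bar>\<pi> \<beta>\<bar> \<le> B" using assms(6) by (auto simp: bounded_iff)
  obtain t \<omega> R where "t > 0" "\<omega> \<ge> 0" "R > 0" and near: "\<And>\<beta>. (\<forall>k. \<bar>\<beta> $ k - \<beta>0 $ k\<bar> < 2 * t) \<Longrightarrow> \<bar>\<pi> \<beta> - \<pi> \<beta>0\<bar> \<le> \<omega>"
    and D: "\<omega> + 2 * B * (CARD('p) * (\<sigma>2 / R / t\<^sup>2)) \<le> \<pi> \<beta>0 / 2"
    and Dc: "4 * (\<omega> + 2 * B * (CARD('p) * (\<sigma>2 / R / t\<^sup>2))) / \<pi> \<beta>0 \<le> c"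
    using prior_localization_constants[OF assms(5,7,13), of B \<sigma>2] by blast
  let ?bound = "\<lambda>n. ennreal (\<epsilon> n) + ennreal (2 * CARD('p) * exp (- (r n * t\<^sup>2 / (2 * \<sigma>2))))"
  have "\<pi> \<in> borel_measurable borel" using assms(5) by (rule borel_measurable_continuous_onI)
  note tv_bound = emeasure_tv_posterior_mvn_gt_le[OF assms(1) _ this pB assms(7)]
  have "(SUP P \<in> Pset n. emeasure P (?E n P)) \<le> ?bound n" if "R \<le> r n" for n
  proof (rule SUP_least)
    fix P assume P: "P \<in> Pset n"
    with assms(10) obtain \<Lambda> where "valid_rule \<Lambda>" "P = traj \<Lambda> \<beta>0 \<sigma>2 n" by blast
    from tv_bound[OF _ this assms(11)[OF P] assms(12)[OF P] _ \<open>t > 0\<close> \<open>\<omega> \<ge> 0\<close> \<open>R > 0\<close> that D Dc]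
    show "emeasure P (?E n P) \<le> ?bound n" using assms(2) near by blast
  qed
  moreover have "eventually (\<lambda>n. R \<le> r n) sequentially" using assms(8) by (simp add: filterlim_at_top)
  moreover have "?bound \<longlonglongrightarrow> 0"
    using tendsto_ennreal_exp_tail_bound[OF assms(8,9), of "t\<^sup>2 / (2 * \<sigma>2)" "2 * CARD('p)"]
      \<open>t > 0\<close> assms(1) by simp
  ultimately show ?thesis
    by (intro limsup_eq_0_if_eventually_le) (auto elim: eventually_mono)
qed

end
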